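(* For every partition $\lambda$ with $\ell(\lambda)\le2$, $\mathbb B_2^{(0)}\mathbb H_\lambda=\mathbb H_{\lambda+1^2}$, where $\lambda+1^2=(\lambda_1+1,\lambda_2+1)$.
   Context: Tableaux (French convention: rows of lengths $\lambda_1\ge\lambda_2\ge\cdots$ from bottom to top). A tableau is identified with (shape, reading word), the reading word listing the entries row by row from top row to bottom row, each row left to right; word operators act on tableaux via reading words, keeping the shape. Semistandard: rows weakly increase left to right, columns strictly increase upwards. Standard of degree $n$: semistandard with entries $1,\dots,n$ each once. For a word $w$, $\mathrm{ev}(w)=(\mathrm{ev}_1,\mathrm{ev}_2,\dots)$ with $\mathrm{ev}_i$ the number of occurrences of $i$. Word operators (compositions act right to left): $\tau_1$ adds $1$ to every letter; $r_{(11\to01)}$, on a word with exactly two letters $1$, replaces the first by $0$; for a word with $(\mathrm{ev}_a,\mathrm{ev}_{a+1})\in\{(1,2),(2,1)\}$, $\sigma_a$ replaces the subword of letters in $\{a,b\}$, $b=a+1$, in place, via $aab\leftrightarrow abb$, $aba\leftrightarrow bba$, $baa\leftrightarrow bab$. For a tableau $T$ of degree $n$, $A_{n+1,n+1}T$ is the sum of all tableaux obtained by adding two cells containing $n+1$ so that the new shape is a partition diagram and the two new cells lie in different columns. Operators extend linearly to $\mathbb Z$-linear combinations of tableaux. For standard $T$ of degree $n$: $\mathbb B_2^{(0)}T=\tau_1r_{(11\to01)}\sigma_1\sigma_2\cdots\sigma_nA_{n+1,n+1}T$. Standardization $VS$: for a semistandard tableau $T$ with letters $1,\dots,k$ and each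 $\mathrm{ev}_i\in\{1,2\}$, repeat: (1) if $\mathrm{ev}_1=2$, replace $T$ by $\tau_1r_{(11\to01)}T$; (2) if every letter occurs once, stop and output $T$; otherwise, with $i$ the smallest letter having $\mathrm{ev}_i=2$, replace $T$ by $\sigma_1\sigma_2\cdots\sigma_{i-1}T$ and return to (1). For a partition $\lambda$ with $\ell(\lambda)\le2$ with conjugate $\lambda'$, $\mathbb H_\lambda=\sum VS(T)$, summed over all semistandard tableaux $T$ with $\mathrm{ev}(T)=\lambda'$ (i.e. letters $1,\dots,\lambda_1$, letter $i$ occurring $\lambda'_i$ times); $\mathbb H_\emptyset$ is the empty tableau. *)

theory Defs
  imports Main "HOL-Library.While_Combinator"
begin

type_synonym word = "nat list"
text \<open>A tableau is (shape, reading word). The shape lists row lengths from the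
  bottom row upwards (French convention); the reading word lists the rows from
  the top row down to the bottom row, each row left to right.\<close>
type_synonym tableau = "nat list \<times> nat list"

definition ev :: "word \<Rightarrow> nat \<Rightarrow> nat" where
  "ev w i = count_list w i"

definition is_partition :: "nat list \<Rightarrow> bool" where
  "is_partition sh \<longleftrightarrow> sorted_wrt (\<ge>) sh \<and> 0 \<notin> set sh"

definition pget :: "nat list \<Rightarrow> nat \<Rightarrow> nat" where
  "pget sh i = (if i < length sh then sh ! i else 0)"

fun split_by :: "nat list \<Rightarrow> 'a list \<Rightarrow> 'a list list" where
  "split_by [] w = []"
| "split_by (l # ls) w = take l w # split_by ls (drop l w)"

text \<open>Rows of a tableau, bottom row first (row 0 is the bottom row).\<close>
definition rows :: "tableau \<Rightarrow> nat list list" where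
  "rows T = rev (split_by (rev (fst T)) (snd T))"

definition entry :: "tableau \<Rightarrow> nat \<Rightarrow> nat \<Rightarrow> nat" where
  "entry T i j = rows T ! i ! j"

definition semistandard :: "tableau \<Rightarrow> bool" where
  "semistandard T \<longleftrightarrow>
     is_partition (fst T) \<and> length (snd T) = sum_list (fst T) \<and>
     (\<forall>i < length (fst T). \<forall>j. Suc j < fst T ! i \<longrightarrow> entry T i j \<le> entry T i (Suc j)) \<and>
     (\<forall>i. Suc i < length (fst T) \<longrightarrow>
        (\<forall>j < fst T ! Suc i. entry T i j < entry T (Suc i) j))"

definition standard :: "nat \<Rightarrow> tableau \<Rightarrow> bool" where
  "standard n T \<longleftrightarrow> semistandard T \<and> sort (snd T) = [1..<Suc n]"

definition tau1 :: "word \<Rightarrow> word" where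
  "tau1 w = map Suc w"

fun first_one_to_zero :: "word \<Rightarrow> word" where
  "first_one_to_zero [] = []"
| "first_one_to_zero (x # xs) = (if x = 1 then 0 # xs else x # first_one_to_zero xs)"

text \<open>r_(11->01): only meaningful when there are exactly two letters 1;
  otherwise (never used) the word is left unchanged.\<close>
definition r1101 :: "word \<Rightarrow> word" where
  "r1101 w = (if ev w 1 = 2 then first_one_to_zero w else w)"

fun fill_sub :: "(nat \<Rightarrow> bool) \<Rightarrow> word \<Rightarrow> word \<Rightarrow> word" where
  "fill_sub P [] s = []"
| "fill_sub P (x # xs) s =
     (if P x then (case s of [] \<Rightarrow> x # fill_sub P xs [] | y # ys \<Rightarrow> y # fill_sub P xs ys)
      else x # fill_sub P xs s)"

definition sig3 :: "nat \<Rightarrow> word \<Rightarrow> word" where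
  "sig3 a u = (let b = Suc a in
     if u = [a,a,b] then [a,b,b] else if u = [a,b,b] then [a,a,b]
     else if u = [a,b,a] then [b,b,a] else if u = [b,b,a] then [a,b,a]
     else if u = [b,a,a] then [b,a,b] else if u = [b,a,b] then [b,a,a]
     else u)"

text \<open>sigma_a: only meaningful when (ev_a, ev_(a+1)) is (1,2) or (2,1);
  otherwise (never used) the word is left unchanged.\<close>
definition sigma :: "nat \<Rightarrow> word \<Rightarrow> word" where
  "sigma a w = (let b = Suc a; P = (\<lambda>x. x = a \<or> x = b) in
     if (ev w a, ev w b) \<in> {(1,2),(2,1)} then fill_sub P w (sig3 a (filter P w)) else w)"

text \<open>sigma_1 sigma_2 ... sigma_k (sigma_k acts first).\<close>
definition sigma_chain :: "nat \<Rightarrow> word \<Rightarrow> word" where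
  "sigma_chain k w = foldr sigma [1..<Suc k] w"

definition on_tab :: "(word \<Rightarrow> word) \<Rightarrow> tableau \<Rightarrow> tableau" where
  "on_tab f T = (fst T, f (snd T))"

type_synonym lincomb = "tableau \<Rightarrow> int"

definition delta :: "tableau \<Rightarrow> lincomb" where
  "delta T = (\<lambda>S. if S = T then 1 else 0)"

text \<open>Linear extension of a map from tableaux to linear combinations
  (combinations are finitely supported).\<close>
definition lin :: "(tableau \<Rightarrow> lincomb) \<Rightarrow> lincomb \<Rightarrow> lincomb" where
  "lin f c = (\<lambda>S. \<Sum>T \<in> {T. c T \<noteq> 0}. c T * f T S)"

text \<open>Shapes obtained from sh by adding two cells, no two in the same column.\<close>
definition add2_shapes :: "nat list \<Rightarrow> nat list set" where
  "add2_shapes sh = {sh'. is_partition sh' \<and> sum_list sh' = sum_list sh + 2 \<and>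
       (\<forall>i. pget sh i \<le> pget sh' i) \<and> (\<forall>i. pget sh' (Suc i) \<le> pget sh i)}"

definition add_cells :: "nat \<Rightarrow> tableau \<Rightarrow> nat list \<Rightarrow> tableau" where
  "add_cells m T sh' = (sh', concat (rev (map (\<lambda>i.
      (if i < length (fst T) then rows T ! i else []) @ replicate (sh' ! i - pget (fst T) i) m)
      [0..<length sh'])))"

definition A_op :: "nat \<Rightarrow> tableau \<Rightarrow> lincomb" where
  "A_op n T = (\<lambda>S. \<Sum>sh' \<in> add2_shapes (fst T). delta (add_cells (Suc n) T sh') S)"

text \<open>B_2^(0) T = tau1 r_(11->01) sigma_1 ... sigma_n A_{n+1,n+1} T, T standard of degree n.\<close>
definition B20_tab :: "tableau \<Rightarrow> lincomb" where
  "B20_tab T = (let n = length (snd T) in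
     lin (\<lambda>S. delta (on_tab (tau1 \<circ> r1101 \<circ> sigma_chain n) S)) (A_op n T))"

definition B20 :: "lincomb \<Rightarrow> lincomb" where
  "B20 c = lin B20_tab c"

definition step1 :: "tableau \<Rightarrow> tableau" where
  "step1 T = (if ev (snd T) 1 = 2 then on_tab (tau1 \<circ> r1101) T else T)"

definition step2 :: "tableau \<Rightarrow> tableau" where
  "step2 T = (let i = (LEAST i. ev (snd T) i = 2) in on_tab (sigma_chain (i - 1)) T)"

definition VS :: "tableau \<Rightarrow> tableau" where
  "VS T = the (while_option (\<lambda>T. \<not> distinct (snd T)) (step1 \<circ> step2) (step1 T))"

definition conj_part :: "nat list \<Rightarrow> nat \<Rightarrow> nat" where
  "conj_part lam i = (if i = 0 then 0 else length (filter (\<lambda>p. i \<le> p) lam))"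

definition H :: "nat list \<Rightarrow> lincomb" where
  "H lam = lin (\<lambda>T. delta (VS T))
     (\<lambda>T. if semistandard T \<and> (\<forall>i. ev (snd T) i = conj_part lam i) then 1 else 0)"

definition plus11 :: "nat list \<Rightarrow> nat list" where
  "plus11 lam = [pget lam 0 + 1, pget lam 1 + 1]"

end

theory Submission
  imports Defs
begin

text \<open>Let \<open>cs = 2^\<lambda>\<^sub>2 1^(\<lambda>\<^sub>1 - \<lambda>\<^sub>2)\<close> be the content \<open>\<lambda>'\<close>, so \<open>H \<lambda>\<close> is the sum of
  \<open>VS T\<close> over the semistandard tableaux \<open>T\<close> of content \<open>cs\<close>. Standardizing \<open>T\<close> with two added
  cells of a new top letter first standardizes \<open>T\<close>, carrying the new cells along, and then
  performs one more step on the doubled top letter, which is exactly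
  \<open>\<tau>\<^sub>1 r\<^sub>1\<^sub>1\<^sub>\<rightarrow>\<^sub>0\<^sub>1 \<sigma>\<^sub>1 \<dots> \<sigma>\<^sub>n\<close>. Hence \<open>B20 (H \<lambda>)\<close> is the sum of \<open>VS\<close> over all tableaux
  obtained from some \<open>T\<close> by adding such a pair of cells, and these are exactly the semistandard
  tableaux of content \<open>cs\<close> followed by one doubled letter. Finally the operators \<open>\<sigma>\<^sub>a\<close> are
  \<open>VS\<close>-preserving bijections between semistandard tableaux whose contents differ by swapping
  the multiplicities of \<open>a\<close> and \<open>a + 1\<close>; moving the doubled letter to the front turns the
  content into \<open>2^(\<lambda>\<^sub>2 + 1) 1^(\<lambda>\<^sub>1 - \<lambda>\<^sub>2)\<close>, the conjugate of \<open>\<lambda> + 1\<^sup>2\<close>.\<close>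

section \<open>Replacing a subword in place\<close>

lemma length_fill_sub [simp]: "length (fill_sub P w s) = length w"
  by (induction P w s rule: fill_sub.induct) (auto split: list.splits)

lemma fill_sub_Nil [simp]: "fill_sub P w [] = w"
  by (induction w) auto

lemma fill_sub_filter: "fill_sub P w (filter P w) = w"
  by (induction w) auto

lemma fill_sub_nth:
  assumes "length s = length (filter P w)" and "k < length w"
  shows "fill_sub P w s ! k = (if P (w ! k) then s ! length (filter P (take k w)) else w ! k)"
  using assms
proof (induction w arbitrary: s k)
  case (Cons x w)
  show ?case
  proof (cases "P x")
    case True
    then obtain y ys where "s = y # ys" using Cons.prems by (cases s) auto
    then show ?thesis using Cons True by (cases k) auto
  next
    case False
    then show ?thesis using Cons by (cases k) auto
  qed
qed simp

lemma filter_fill_sub: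
  "length s = length (filter P w) \<Longrightarrow> set s \<subseteq> Collect P \<Longrightarrow> filter P (fill_sub P w s) = s"
  by (induction w arbitrary: s) (auto split: list.splits)

lemma filter_fill_sub_disjoint:
  "set s \<inter> Collect Q = {} \<Longrightarrow> (\<And>x. P x \<Longrightarrow> \<not> Q x) \<Longrightarrow> filter Q (fill_sub P w s) = filter Q w"
  by (induction w arbitrary: s) (auto split: list.splits)

lemma fill_sub_fill_sub:
  "length s = length (filter P w) \<Longrightarrow> set s \<subseteq> Collect P \<Longrightarrow> length t = length s \<Longrightarrow>
   fill_sub P (fill_sub P w s) t = fill_sub P w t"
proof (induction w arbitrary: s t)
  case (Cons x w) then show ?case by (cases s; cases t) auto
qed simp

lemma fill_sub_commute:
  assumes "set s \<inter> Collect Q = {}" "set t \<inter> Collect P = {}" "\<And>x. P x \<Longrightarrow> \<not> Q x"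
  shows "fill_sub Q (fill_sub P w s) t = fill_sub P (fill_sub Q w t) s"
  using assms
proof (induction w arbitrary: s t)
  case (Cons x w) then show ?case by (cases s; cases t) auto
qed simp

lemma count_list_filter: "count_list (filter P xs) x = (if P x then count_list xs x else 0)"
  by (induction xs) auto

lemma count_fill_sub:
  "length s = length (filter P w) \<Longrightarrow>
   count_list (fill_sub P w s) x = (if P x then 0 else count_list w x) + count_list s x"
  by (induction w arbitrary: s) (auto split: list.splits)

lemma map_fill_sub:
  "(\<And>x. P' (f x) = P x) \<Longrightarrow> map f (fill_sub P w s) = fill_sub P' (map f w) (map f s)"
  by (induction w arbitrary: s) (auto split: list.splits)

lemma first_one_to_zero_fill_sub:
  "\<not> P 0 \<Longrightarrow> \<not> P 1 \<Longrightarrow> 1 \<notin> set s \<Longrightarrow>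
   first_one_to_zero (fill_sub P w s) = fill_sub P (first_one_to_zero w) s"
  by (induction w arbitrary: s) (auto split: list.splits)

section \<open>The operators \<open>\<sigma>\<^sub>a\<close>\<close>

definition pair_letter :: "nat \<Rightarrow> nat \<Rightarrow> bool" where
  "pair_letter a x \<longleftrightarrow> x = a \<or> x = Suc a"

definition sigma_applies :: "nat \<Rightarrow> word \<Rightarrow> bool" where
  "sigma_applies a w \<longleftrightarrow> (ev w a, ev w (Suc a)) \<in> {(1,2),(2,1)}"

lemma sigma_eq_fill_sub:
  "sigma a w = (if sigma_applies a w then fill_sub (pair_letter a) w (sig3 a (filter (pair_letter a) w)) else w)"
  unfolding sigma_def sigma_applies_def pair_letter_def Let_def by simp

lemma pair_subword_cases:
  assumes "sigma_applies a w"
  shows "filter (pair_letter a) w \<in>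
    {[a,Suc a,Suc a], [Suc a,a,Suc a], [Suc a,Suc a,a], [a,a,Suc a], [a,Suc a,a], [Suc a,a,a]}"
proof -
  let ?u = "filter (pair_letter a) w"
  have set_u: "set ?u \<subseteq> {a, Suc a}" by (auto simp: pair_letter_def)
  have counts: "(count_list ?u a, count_list ?u (Suc a)) \<in> {(1,2),(2,1)}"
    using assms by (simp add: count_list_filter sigma_applies_def ev_def pair_letter_def)
  have "length ?u = count_list ?u a + count_list ?u (Suc a)"
    using sum_count_set[OF set_u] by simp
  then have "length ?u = 3" using counts by auto
  then obtain x y z where u: "?u = [x,y,z]"
    by (metis (no_types, lifting) length_0_conv length_Suc_conv numeral_3_eq_3)
  with set_u have "x \<in> {a, Suc a}" "y \<in> {a, Suc a}" "z \<in> {a, Suc a}" by auto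
  then show ?thesis using counts u by auto
qed

lemma sig3_cases:
  "u \<in> {[a,Suc a,Suc a], [Suc a,a,Suc a], [Suc a,Suc a,a], [a,a,Suc a], [a,Suc a,a], [Suc a,a,a]} \<Longrightarrow>
   (u = [a,a,Suc a] \<and> sig3 a u = [a,Suc a,Suc a]) \<or> (u = [a,Suc a,Suc a] \<and> sig3 a u = [a,a,Suc a]) \<or>
   (u = [a,Suc a,a] \<and> sig3 a u = [Suc a,Suc a,a]) \<or> (u = [Suc a,Suc a,a] \<and> sig3 a u = [a,Suc a,a]) \<or>
   (u = [Suc a,a,a] \<and> sig3 a u = [Suc a,a,Suc a]) \<or> (u = [Suc a,a,Suc a] \<and> sig3 a u = [Suc a,a,a])"
  unfolding sig3_def Let_def by auto

lemma sig3_pair_subword: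
  assumes "sigma_applies a w"
  defines "u \<equiv> filter (pair_letter a) w"
  shows "length (sig3 a u) = length u"
    and "set (sig3 a u) \<subseteq> Collect (pair_letter a)"
    and "count_list (sig3 a u) a = count_list w (Suc a)"
    and "count_list (sig3 a u) (Suc a) = count_list w a"
    and "sig3 a (sig3 a u) = u"
proof -
  have "(count_list w a, count_list w (Suc a)) \<in> {(1,2),(2,1)}"
    using assms by (simp add: sigma_applies_def ev_def)
  moreover have "count_list u a = count_list w a" "count_list u (Suc a) = count_list w (Suc a)"
    by (auto simp: u_def count_list_filter pair_letter_def)
  moreover note sig3_cases[OF pair_subword_cases[OF assms(1), folded u_def]]
  ultimately show "length (sig3 a u) = length u" "set (sig3 a u) \<subseteq> Collect (pair_letter a)"
    "count_list (sig3 a u) a = count_list w (Suc a)" "count_list (sig3 a u) (Suc a) = count_list w a"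
    "sig3 a (sig3 a u) = u"
    by (auto simp: pair_letter_def sig3_def)
qed

lemma length_sigma [simp]: "length (sigma a w) = length w"
  by (simp add: sigma_eq_fill_sub)

lemma ev_sigma:
  assumes "sigma_applies a w"
  shows "ev (sigma a w) x = (if x = a then ev w (Suc a) else if x = Suc a then ev w a else ev w x)"
proof -
  have "count_list (sig3 a (filter (pair_letter a) w)) x = 0" if "\<not> pair_letter a x"
    using sig3_pair_subword(2)[OF assms] that by (auto simp: count_list_0_iff)
  then show ?thesis using assms sig3_pair_subword[OF assms]
    by (auto simp: sigma_eq_fill_sub ev_def count_fill_sub pair_letter_def)
qed

lemma ev_sigma_other: "x \<noteq> a \<Longrightarrow> x \<noteq> Suc a \<Longrightarrow> ev (sigma a w) x = ev w x"
  by (cases "sigma_applies a w") (auto simp: ev_sigma, simp add: sigma_eq_fill_sub)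

lemma sigma_applies_sigma: "sigma_applies a w \<Longrightarrow> sigma_applies a (sigma a w)"
  using ev_sigma[of a w] by (auto simp: sigma_applies_def)

lemma filter_pair_sigma:
  "sigma_applies a w \<Longrightarrow> filter (pair_letter a) (sigma a w) = sig3 a (filter (pair_letter a) w)"
  using sig3_pair_subword by (simp add: sigma_eq_fill_sub filter_fill_sub)

lemma sigma_sigma: "sigma_applies a w \<Longrightarrow> sigma a (sigma a w) = w"
proof -
  assume applies: "sigma_applies a w"
  let ?u = "filter (pair_letter a) w"
  have "sigma a (sigma a w) = fill_sub (pair_letter a) (sigma a w) (sig3 a (sig3 a ?u))"
    using sigma_applies_sigma[OF applies] filter_pair_sigma[OF applies]
    by (simp add: sigma_eq_fill_sub[of a "sigma a w"])
  also have "\<dots> = fill_sub (pair_letter a) w ?u"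
    using applies sig3_pair_subword[OF applies] by (simp add: sigma_eq_fill_sub fill_sub_fill_sub)
  finally show ?thesis by (simp add: fill_sub_filter)
qed

lemma filter_sigma_disjoint: "\<not> Q a \<Longrightarrow> \<not> Q (Suc a) \<Longrightarrow> filter Q (sigma a w) = filter Q w"
proof (cases "sigma_applies a w")
  case True
  assume "\<not> Q a" "\<not> Q (Suc a)"
  moreover have "set (sig3 a (filter (pair_letter a) w)) \<inter> Collect Q = {}"
    using sig3_pair_subword(2)[OF True] calculation by (auto simp: pair_letter_def)
  ultimately show ?thesis
    using True by (auto simp: sigma_eq_fill_sub pair_letter_def intro!: filter_fill_sub_disjoint)
qed (simp add: sigma_eq_fill_sub)

lemma sigma_commute:
  assumes "Suc a < c"
  shows "sigma a (sigma c w) = sigma c (sigma a w)"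
proof -
  have applies: "sigma_applies a (sigma c w) = sigma_applies a w"
      "sigma_applies c (sigma a w) = sigma_applies c w"
    using assms by (simp_all add: sigma_applies_def ev_sigma_other)
  have filters: "filter (pair_letter a) (sigma c w) = filter (pair_letter a) w"
      "filter (pair_letter c) (sigma a w) = filter (pair_letter c) w"
    using assms by (auto simp: pair_letter_def intro!: filter_sigma_disjoint)
  show ?thesis
  proof (cases "sigma_applies a w \<and> sigma_applies c w")
    case True
    let ?s = "sig3 a (filter (pair_letter a) w)" and ?t = "sig3 c (filter (pair_letter c) w)"
    have "fill_sub (pair_letter a) (fill_sub (pair_letter c) w ?t) ?s =
          fill_sub (pair_letter c) (fill_sub (pair_letter a) w ?s) ?t"
      by (rule fill_sub_commute)
        (use True sig3_pair_subword(2)[of a w] sig3_pair_subword(2)[of c w] assms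
          in \<open>auto simp: pair_letter_def subset_iff\<close>)
    then show ?thesis using True applies filters
      by (simp add: sigma_eq_fill_sub[of a] sigma_eq_fill_sub[of c])
  qed (use applies in \<open>auto simp: sigma_eq_fill_sub[of a] sigma_eq_fill_sub[of c]\<close>)
qed

lemma ev_tau1: "ev (tau1 w) (Suc x) = ev w x" "ev (tau1 w) 0 = 0"
  by (induction w) (auto simp: tau1_def ev_def)

lemma length_tau1 [simp]: "length (tau1 w) = length w"
  by (simp add: tau1_def)

lemma tau1_sigma: "tau1 (sigma a w) = sigma (Suc a) (tau1 w)"
proof -
  have pair_Suc: "pair_letter (Suc a) (Suc x) = pair_letter a x" for x
    by (auto simp: pair_letter_def)
  have "filter (pair_letter (Suc a)) (map Suc w) = map Suc (filter (pair_letter a) w)"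
    by (induction w) (auto simp: pair_letter_def)
  moreover have "sig3 (Suc a) (map Suc u) = map Suc (sig3 a u)" for u
    unfolding sig3_def Let_def by (auto simp: map_eq_Cons_conv)
  moreover have "sigma_applies (Suc a) (map Suc w) = sigma_applies a w"
    using ev_tau1[of w] by (simp add: sigma_applies_def tau1_def)
  ultimately show ?thesis
    by (auto simp: sigma_eq_fill_sub tau1_def map_fill_sub[of "pair_letter (Suc a)" Suc] pair_Suc)
qed

lemma count_first_one_to_zero:
  "count_list (first_one_to_zero w) x =
     (if x = 0 \<and> 1 \<in> set w then Suc (count_list w 0)
      else if x = 1 then count_list w 1 - 1 else count_list w x)"
  by (induction w) auto

lemma filter_first_one_to_zero: "\<not> P 0 \<Longrightarrow> \<not> P 1 \<Longrightarrow> filter P (first_one_to_zero w) = filter P w"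
  by (induction w) auto

lemma length_r1101 [simp]: "length (r1101 w) = length w"
proof -
  have "length (first_one_to_zero w) = length w" by (induction w) auto
  then show ?thesis by (simp add: r1101_def)
qed

lemma r1101_sigma:
  assumes "2 \<le> a"
  shows "r1101 (sigma a w) = sigma a (r1101 w)"
proof -
  have ev1: "ev (sigma a w) 1 = ev w 1" using assms by (simp add: ev_sigma_other)
  have applies: "sigma_applies a (first_one_to_zero w) = sigma_applies a w"
    using assms by (simp add: sigma_applies_def ev_def count_first_one_to_zero)
  have filters: "filter (pair_letter a) (first_one_to_zero w) = filter (pair_letter a) w"
    using assms by (intro filter_first_one_to_zero) (auto simp: pair_letter_def)
  show ?thesis
  proof (cases "sigma_applies a w")
    case True
    then have "1 \<notin> set (sig3 a (filter (pair_letter a) w))"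
      using sig3_pair_subword(2)[OF True] assms by (auto simp: pair_letter_def)
    then show ?thesis using True assms ev1 applies filters
      by (auto simp: r1101_def sigma_eq_fill_sub first_one_to_zero_fill_sub pair_letter_def)
  qed (use ev1 applies in \<open>auto simp: r1101_def sigma_eq_fill_sub\<close>)
qed

lemma sigma_chain_0 [simp]: "sigma_chain 0 w = w"
  by (simp add: sigma_chain_def)

lemma sigma_chain_Suc: "sigma_chain (Suc k) w = sigma_chain k (sigma (Suc k) w)"
  by (simp add: sigma_chain_def)

lemma length_sigma_chain [simp]: "length (sigma_chain k w) = length w"
  by (induction k arbitrary: w) (auto simp: sigma_chain_Suc)

lemma sigma_chain_sigma_commute: "Suc k < a \<Longrightarrow> sigma_chain k (sigma a w) = sigma a (sigma_chain k w)"
  by (induction k arbitrary: w) (simp_all add: sigma_chain_Suc sigma_commute)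

section \<open>Contents and the standardization step\<close>

definition content_mult :: "nat list \<Rightarrow> nat \<Rightarrow> nat" where
  "content_mult cs i = (if 0 < i \<and> i \<le> length cs then cs ! (i - 1) else 0)"

definition has_content :: "word \<Rightarrow> nat list \<Rightarrow> bool" where
  "has_content w cs \<longleftrightarrow> (\<forall>i. ev w i = content_mult cs i)"

definition mults_12 :: "nat list \<Rightarrow> bool" where
  "mults_12 cs \<longleftrightarrow> set cs \<subseteq> {1,2}"

definition doubles :: "nat list \<Rightarrow> nat" where
  "doubles cs = count_list cs 2"

lemma content_mult_swap_other:
  "i \<noteq> Suc (length xs) \<Longrightarrow> i \<noteq> Suc (Suc (length xs)) \<Longrightarrow>
   content_mult (xs @ p # q # ys) i = content_mult (xs @ q # p # ys) i"
  by (auto simp: content_mult_def nth_append nth_Cons split: nat.splits)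

lemma content_mult_snoc:
  "content_mult (cs @ [c]) x = (if x = Suc (length cs) then c else content_mult cs x)"
  by (auto simp: content_mult_def nth_append)

lemma has_content_sigma:
  assumes content: "has_content w (xs @ p # q # ys)" and pq: "(p, q) \<in> {(1,2),(2,1)}"
    and a: "a = Suc (length xs)"
  shows "sigma_applies a w" and "has_content (sigma a w) (xs @ q # p # ys)"
proof -
  have ev_a: "ev w a = p" "ev w (Suc a) = q"
    using content a by (auto simp: has_content_def content_mult_def nth_append)
  then show applies: "sigma_applies a w" using pq by (simp add: sigma_applies_def)
  show "has_content (sigma a w) (xs @ q # p # ys)"
    unfolding has_content_def
  proof
    fix i
    show "ev (sigma a w) i = content_mult (xs @ q # p # ys) i"
    proof (cases "i = a \<or> i = Suc a")
      case True
      then show ?thesis using ev_sigma[OF applies, of i] ev_a a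
        by (auto simp: content_mult_def nth_append)
    next
      case False
      then show ?thesis using ev_sigma[OF applies, of i] content a content_mult_swap_other[of i xs]
        by (auto simp: has_content_def)
    qed
  qed
qed

lemma has_content_sigma_chain:
  "has_content w (replicate j 1 @ 2 # rest) \<Longrightarrow> has_content (sigma_chain j w) (2 # replicate j 1 @ rest)"
proof (induction j arbitrary: w rest)
  case (Suc j)
  have "has_content w (replicate j 1 @ 1 # 2 # rest)"
    using Suc.prems by (simp add: replicate_append_same[symmetric])
  then have "has_content (sigma (Suc j) w) (replicate j 1 @ 2 # 1 # rest)"
    by (rule has_content_sigma(2)) auto
  then show ?case
    using Suc.IH by (simp add: sigma_chain_Suc replicate_append_same[symmetric])
qed simp

lemma has_content_tau1_r1101:
  assumes content: "has_content w (2 # rest)"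
  shows "has_content (tau1 (r1101 w)) (1 # 1 # rest)"
  unfolding has_content_def
proof
  fix i
  have ev_01: "ev w 1 = 2" "ev w 0 = 0" using content by (auto simp: has_content_def content_mult_def)
  then have "1 \<in> set w" using count_list_0_iff[of w 1] by (simp add: ev_def)
  moreover have "r1101 w = first_one_to_zero w" using ev_01 by (simp add: r1101_def)
  ultimately show "ev (tau1 (r1101 w)) i = content_mult (1 # 1 # rest) i"
    using content ev_01 ev_tau1[of "first_one_to_zero w"]
    by (cases i) (auto simp: has_content_def content_mult_def ev_def count_first_one_to_zero)
qed

lemma mults_12_first_double:
  assumes "mults_12 cs" "2 \<in> set cs"
  obtains j rest where "cs = replicate j 1 @ 2 # rest"
proof -
  obtain xs rest where cs: "cs = xs @ 2 # rest" "2 \<notin> set xs"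
    using split_list_first[OF assms(2)] by blast
  then have "replicate (length xs) 1 = xs"
    using assms(1) by (intro replicate_length_same) (auto simp: mults_12_def)
  then show ?thesis using that[of "length xs" rest] cs by simp
qed

lemma mults_12_no_double: "mults_12 cs \<Longrightarrow> 2 \<notin> set cs \<Longrightarrow> cs = replicate (length cs) 1"
  by (metis insert_iff mults_12_def replicate_length_same singletonD subsetD)

text \<open>One pass of the loop in \<^const>\<open>VS\<close>: the first doubled letter is moved down to \<open>1\<close> by
  the chain of \<open>\<sigma>\<close>'s, then \<open>\<tau>\<^sub>1 r\<^sub>1\<^sub>1\<^sub>\<rightarrow>\<^sub>0\<^sub>1\<close> splits it into two single letters.\<close>

definition std_step :: "word \<Rightarrow> word" where
  "std_step w = tau1 (r1101 (sigma_chain ((LEAST i. ev w i = 2) - 1) w))"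

fun std_step_content :: "nat list \<Rightarrow> nat list" where
  "std_step_content [] = []"
| "std_step_content (x # xs) = (if x = 2 then 1 # 1 # xs else 1 # std_step_content xs)"

lemma length_std_step [simp]: "length (std_step w) = length w"
  by (simp add: std_step_def)

lemma length_std_step_iter [simp]: "length ((std_step ^^ k) w) = length w"
  by (induction k) auto

lemma Least_ev_eq_2:
  assumes "has_content w (replicate j 1 @ 2 # rest)"
  shows "(LEAST i. ev w i = 2) = Suc j"
proof (rule Least_equality)
  show "ev w (Suc j) = 2" using assms by (simp add: has_content_def content_mult_def nth_append)
  fix y assume y: "ev w y = 2"
  show "Suc j \<le> y"
  proof (rule ccontr)
    assume "\<not> Suc j \<le> y"
    then have "content_mult (replicate j 1 @ 2 # rest) y \<le> 1"
      by (auto simp: content_mult_def nth_append)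
    then show False using y assms by (simp add: has_content_def)
  qed
qed

lemma std_step_eq_sigma_chain:
  "has_content w (replicate j 1 @ 2 # rest) \<Longrightarrow> std_step w = tau1 (r1101 (sigma_chain j w))"
  by (simp add: std_step_def Least_ev_eq_2)

lemma has_content_std_step:
  assumes "mults_12 cs" "2 \<in> set cs" "has_content w cs"
  shows "has_content (std_step w) (std_step_content cs)"
proof -
  obtain j rest where cs: "cs = replicate j 1 @ 2 # rest"
    using mults_12_first_double assms by blast
  have "std_step_content cs = 1 # 1 # replicate j 1 @ rest"
    unfolding cs by (induction j) auto
  then show ?thesis
    using assms cs has_content_tau1_r1101[OF has_content_sigma_chain] by (simp add: std_step_eq_sigma_chain)
qed

lemma mults_12_std_step_content: "mults_12 cs \<Longrightarrow> mults_12 (std_step_content cs)"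
  by (induction cs) (auto simp: mults_12_def)

lemma length_std_step_content: "2 \<in> set cs \<Longrightarrow> length (std_step_content cs) = Suc (length cs)"
  by (induction cs) auto

lemma doubles_std_step_content:
  "2 \<in> set cs \<Longrightarrow> mults_12 cs \<Longrightarrow> doubles (std_step_content cs) = doubles cs - 1"
  by (induction cs) (auto simp: doubles_def mults_12_def count_list_0_iff)

lemma std_step_content_append: "2 \<in> set xs \<Longrightarrow> std_step_content (xs @ ys) = std_step_content xs @ ys"
  by (induction xs) auto

lemma mults_12_sum_list: "mults_12 cs \<Longrightarrow> sum_list cs = length cs + doubles cs"
  by (induction cs) (auto simp: mults_12_def doubles_def)

lemma doubles_eq_0_iff: "doubles cs = 0 \<longleftrightarrow> 2 \<notin> set cs"
  by (simp add: doubles_def count_list_0_iff)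

lemma distinct_iff_count_list_le_1: "distinct w \<longleftrightarrow> (\<forall>x. count_list w x \<le> 1)"
proof (induction w)
  case (Cons a w)
  have "(\<forall>x. count_list (a # w) x \<le> 1) \<longleftrightarrow> count_list w a = 0 \<and> (\<forall>x. count_list w x \<le> 1)"
  proof
    assume h: "\<forall>x. count_list (a # w) x \<le> 1"
    show "count_list w a = 0 \<and> (\<forall>x. count_list w x \<le> 1)"
    proof
      show "count_list w a = 0" using h[rule_format, of a] by simp
      show "\<forall>x. count_list w x \<le> 1" using h by (metis count_list.simps(2) le_trans le_add1)
    qed
  qed auto
  then show ?case using Cons by (simp add: count_list_0_iff)
qed simp

lemma distinct_iff_no_double:
  assumes "has_content w cs" "mults_12 cs"
  shows "distinct w \<longleftrightarrow> 2 \<notin> set cs"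
proof -
  have "2 \<in> set cs \<longleftrightarrow> (\<exists>x. 1 < content_mult cs x)"
  proof
    assume "2 \<in> set cs"
    then obtain k where "k < length cs" "cs ! k = 2" by (auto simp: in_set_conv_nth)
    then show "\<exists>x. 1 < content_mult cs x" by (intro exI[of _ "Suc k"]) (simp add: content_mult_def)
  next
    assume "\<exists>x. 1 < content_mult cs x"
    then obtain x where "0 < x" "x \<le> length cs" "1 < cs ! (x - 1)"
      by (auto simp: content_mult_def split: if_splits)
    moreover have x_in: "cs ! (x - 1) \<in> set cs" using calculation by (intro nth_mem) arith
    moreover have "cs ! (x - 1) \<in> {1, 2}" using x_in assms(2) by (auto simp: mults_12_def)
    ultimately show "2 \<in> set cs" by (metis empty_iff insert_iff less_irrefl)
  qed
  moreover have "distinct w \<longleftrightarrow> (\<forall>x. content_mult cs x \<le> 1)"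
    using assms(1) by (simp add: distinct_iff_count_list_le_1 has_content_def ev_def)
  ultimately show ?thesis by (simp add: not_less)
qed

lemma while_option_VS:
  "mults_12 cs \<Longrightarrow> has_content w cs \<Longrightarrow>
   while_option (\<lambda>T. \<not> distinct (snd T)) (step1 \<circ> step2) (sh, w) = Some (sh, (std_step ^^ doubles cs) w)"
proof (induction "doubles cs" arbitrary: cs w)
  case 0
  then show ?case
    using distinct_iff_no_double[of w cs] doubles_eq_0_iff[of cs] by (subst while_option_unfold) simp
next
  case (Suc k)
  then have two: "2 \<in> set cs" using doubles_eq_0_iff by force
  obtain j rest where cs: "cs = replicate j 1 @ 2 # rest"
    using mults_12_first_double Suc.prems two by blast
  have "has_content (sigma_chain j w) (2 # replicate j 1 @ rest)"
    using has_content_sigma_chain Suc.prems cs by simp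
  then have "ev (sigma_chain j w) 1 = 2" by (simp add: has_content_def content_mult_def)
  then have step: "(step1 \<circ> step2) (sh, w) = (sh, std_step w)"
    using Suc.prems cs by (simp add: step1_def step2_def on_tab_def Least_ev_eq_2 std_step_eq_sigma_chain)
  have "k = doubles (std_step_content cs)"
    using Suc two doubles_std_step_content by force
  from Suc.hyps(1)[OF this mults_12_std_step_content has_content_std_step] Suc.prems two
  have "while_option (\<lambda>T. \<not> distinct (snd T)) (step1 \<circ> step2) (sh, std_step w) =
      Some (sh, (std_step ^^ k) (std_step w))"
    by (simp add: \<open>k = _\<close>[symmetric])
  then show ?case
    using Suc.prems Suc.hyps(2)[symmetric] two distinct_iff_no_double[of w cs] step
    by (subst while_option_unfold) (simp add: funpow_Suc_right del: funpow.simps)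
qed

lemma VS_eq_std_step_iter:
  assumes "mults_12 cs" "has_content w cs"
  shows "VS (sh, w) = (sh, (std_step ^^ doubles cs) w)"
proof (cases "ev w 1 = 2")
  case True
  then obtain rest where cs: "cs = 2 # rest"
    using assms by (cases cs) (auto simp: has_content_def content_mult_def mults_12_def)
  then have "step1 (sh, w) = (sh, std_step w)"
    using True assms std_step_eq_sigma_chain[of w 0 rest] by (simp add: step1_def on_tab_def)
  moreover obtain k where "doubles cs = Suc k" "doubles (std_step_content cs) = k"
    using cs assms by (simp add: doubles_def)
  ultimately show ?thesis
    using while_option_VS[OF mults_12_std_step_content has_content_std_step, of cs w sh] assms cs
    by (simp add: VS_def funpow_Suc_right del: funpow.simps)
next
  case False
  then show ?thesis using while_option_VS[OF assms] by (simp add: VS_def step1_def)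
qed

lemma std_step_sigma:
  assumes mults: "mults_12 (xs @ 1 # 2 # ys)" and two: "2 \<in> set xs"
    and content: "has_content w (xs @ 1 # 2 # ys)" and a: "a = Suc (length xs)"
  shows "std_step (sigma a w) = sigma (Suc a) (std_step w)"
proof -
  obtain j rest where xs: "xs = replicate j 1 @ 2 # rest"
    using mults_12_first_double[of xs] mults two by (auto simp: mults_12_def)
  have "has_content (sigma a w) (xs @ 2 # 1 # ys)"
    using has_content_sigma(2)[OF content _ a] by simp
  then have "std_step (sigma a w) = tau1 (r1101 (sigma_chain j (sigma a w)))"
    using xs std_step_eq_sigma_chain[of _ j "rest @ 2 # 1 # ys"] by simp
  moreover have "std_step w = tau1 (r1101 (sigma_chain j w))"
    using content xs std_step_eq_sigma_chain[of w j "rest @ 1 # 2 # ys"] by simp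
  moreover have "Suc j < a" "2 \<le> a" using a xs by auto
  ultimately show ?thesis by (simp add: sigma_chain_sigma_commute r1101_sigma tau1_sigma)
qed

lemma std_step_sigma_absorbed:
  assumes "has_content w (replicate n 1 @ 1 # 2 # ys)"
  shows "std_step (sigma (Suc n) w) = std_step w"
proof -
  have "has_content w (replicate (Suc n) 1 @ 2 # ys)"
    using assms by (simp add: replicate_append_same[symmetric])
  then have "std_step w = tau1 (r1101 (sigma_chain (Suc n) w))"
    by (rule std_step_eq_sigma_chain)
  moreover have "has_content (sigma (Suc n) w) (replicate n 1 @ 2 # 1 # ys)"
    using has_content_sigma(2)[OF assms] by simp
  then have "std_step (sigma (Suc n) w) = tau1 (r1101 (sigma_chain n (sigma (Suc n) w)))"
    by (rule std_step_eq_sigma_chain)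
  ultimately show ?thesis by (simp add: sigma_chain_Suc)
qed

text \<open>Induction on the doubled letters below \<open>a\<close>: each standardization step commutes with
  \<open>\<sigma>\<^sub>a\<close> (shifting \<open>a\<close>) until the letters \<open>a, a + 1\<close> are reached, and there the step
  absorbs \<open>\<sigma>\<^sub>a\<close> as the last factor of its chain.\<close>

lemma std_step_iter_sigma:
  assumes "mults_12 (xs @ 1 # 2 # ys)" "has_content w (xs @ 1 # 2 # ys)" "a = Suc (length xs)"
  shows "(std_step ^^ doubles (xs @ 1 # 2 # ys)) (sigma a w) = (std_step ^^ doubles (xs @ 1 # 2 # ys)) w"
  using assms
proof (induction "doubles xs" arbitrary: xs w a rule: less_induct)
  case less
  let ?cs = "xs @ 1 # 2 # ys"
  obtain k where k: "doubles ?cs = Suc k" by (simp add: doubles_def)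
  show ?case
  proof (cases "2 \<in> set xs")
    case True
    have mults_xs: "mults_12 xs" using less.prems(1) by (simp add: mults_12_def)
    have content: "has_content (std_step w) (std_step_content xs @ 1 # 2 # ys)"
      using has_content_std_step[OF less.prems(1) _ less.prems(2)] std_step_content_append[OF True] by simp
    have mults: "mults_12 (std_step_content xs @ 1 # 2 # ys)"
      using mults_12_std_step_content[OF less.prems(1)] std_step_content_append[OF True] by simp
    have fewer: "doubles (std_step_content xs) < doubles xs" and "doubles xs > 0"
      using doubles_std_step_content[OF True mults_xs] True doubles_eq_0_iff[of xs] by auto
    then have "doubles (std_step_content xs @ 1 # 2 # ys) = k"
      using k doubles_std_step_content[OF True mults_xs] by (simp add: doubles_def)
    moreover have "Suc a = Suc (length (std_step_content xs))"
      using length_std_step_content[OF True] less.prems(3) by simp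
    ultimately have "(std_step ^^ k) (sigma (Suc a) (std_step w)) = (std_step ^^ k) (std_step w)"
      using less.hyps[OF fewer mults content] by simp
    then show ?thesis
      using std_step_sigma[OF less.prems(1) True less.prems(2,3)] k
      by (simp add: funpow_Suc_right del: funpow.simps)
  next
    case False
    then obtain n where "xs = replicate n 1"
      using less.prems(1) mults_12_no_double[of xs] by (auto simp: mults_12_def)
    then have "std_step (sigma a w) = std_step w"
      using std_step_sigma_absorbed less.prems(2,3) by simp
    then show ?thesis using k by (simp add: funpow_Suc_right del: funpow.simps)
  qed
qed

lemma VS_sigma:
  assumes mults: "mults_12 (xs @ p # q # ys)" and pq: "(p, q) \<in> {(1,2),(2,1)}"
    and content: "has_content w (xs @ p # q # ys)" and a: "a = Suc (length xs)"
  shows "VS (sh, sigma a w) = VS (sh, w)"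
proof -
  have VS_sigma_12: "VS (sh, sigma a u) = VS (sh, u)"
    if mults_u: "mults_12 (xs @ 1 # 2 # ys)" and content_u: "has_content u (xs @ 1 # 2 # ys)" for u
  proof -
    have "has_content (sigma a u) (xs @ 2 # 1 # ys)"
      using has_content_sigma(2)[OF content_u _ a] by simp
    moreover have "mults_12 (xs @ 2 # 1 # ys)" using mults_u by (auto simp: mults_12_def)
    moreover have "doubles (xs @ 2 # 1 # ys) = doubles (xs @ 1 # 2 # ys)" by (simp add: doubles_def)
    ultimately show ?thesis
      using VS_eq_std_step_iter[OF mults_u content_u] std_step_iter_sigma[OF mults_u content_u a]
        VS_eq_std_step_iter[of "xs @ 2 # 1 # ys" "sigma a u"] by simp
  qed
  show ?thesis
  proof (cases "(p, q) = (1, 2)")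
    case True
    then show ?thesis using VS_sigma_12 mults content by simp
  next
    case False
    then have "p = 2" "q = 1" using pq by auto
    then have "has_content (sigma a w) (xs @ 1 # 2 # ys)" "mults_12 (xs @ 1 # 2 # ys)"
        "sigma a (sigma a w) = w"
      using has_content_sigma[OF content _ a] mults sigma_sigma by (auto simp: mults_12_def)
    then show ?thesis using VS_sigma_12[of "sigma a w"] by simp
  qed
qed

section \<open>Tableaux as lists of rows\<close>

definition tab_of_rows :: "nat list list \<Rightarrow> tableau" where
  "tab_of_rows R = (map length R, concat (rev R))"

definition ss_rows :: "nat list list \<Rightarrow> bool" where
  "ss_rows R \<longleftrightarrow> is_partition (map length R) \<and> (\<forall>i<length R. sorted (R ! i)) \<and>
     (\<forall>i. Suc i < length R \<longrightarrow> (\<forall>j<length (R ! Suc i). R ! i ! j < R ! Suc i ! j))"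

lemma fst_tab_of_rows [simp]: "fst (tab_of_rows R) = map length R"
  by (simp add: tab_of_rows_def)

lemma snd_tab_of_rows [simp]: "snd (tab_of_rows R) = concat (rev R)"
  by (simp add: tab_of_rows_def)

lemma rows_tab_of_rows [simp]: "rows (tab_of_rows R) = R"
proof -
  have "split_by (map length Rs) (concat Rs) = Rs" for Rs :: "nat list list"
    by (induction Rs) auto
  then show ?thesis unfolding rows_def tab_of_rows_def by (simp add: rev_map)
qed

lemma tab_of_rows_rows:
  assumes "length (snd T) = sum_list (fst T)"
  shows "tab_of_rows (rows T) = T"
proof -
  have "length w = sum_list ls \<Longrightarrow> map length (split_by ls w) = ls \<and> concat (split_by ls w) = w"
    for ls and w :: word
    by (induction ls arbitrary: w) (auto simp: min_def)
  from this[of "snd T" "rev (fst T)"] show ?thesis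
    using assms unfolding rows_def tab_of_rows_def by (simp add: rev_map[symmetric] sum_list_rev)
qed

lemma semistandard_tab_of_rows: "semistandard (tab_of_rows R) \<longleftrightarrow> ss_rows R"
  unfolding semistandard_def ss_rows_def entry_def rows_tab_of_rows
  by (auto simp: tab_of_rows_def length_concat rev_map[symmetric] sum_list_rev sorted_iff_nth_Suc)

lemma semistandard_rows:
  assumes "semistandard T"
  shows "T = tab_of_rows (rows T)" and "ss_rows (rows T)"
proof -
  show T: "T = tab_of_rows (rows T)"
    using assms by (intro tab_of_rows_rows[symmetric]) (simp add: semistandard_def)
  show "ss_rows (rows T)" using assms semistandard_tab_of_rows T by metis
qed

lemma ss_rows_sorted:
  "ss_rows R \<Longrightarrow> i < length R \<Longrightarrow> j \<le> j' \<Longrightarrow> j' < length (R ! i) \<Longrightarrow> R ! i ! j \<le> R ! i ! j'"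
  by (auto simp: ss_rows_def intro: sorted_nth_mono)

lemma ss_rows_column:
  "ss_rows R \<Longrightarrow> Suc i < length R \<Longrightarrow> j < length (R ! Suc i) \<Longrightarrow> R ! i ! j < R ! Suc i ! j"
  by (auto simp: ss_rows_def)

lemma partition_row_lengths:
  "is_partition (map length R) \<Longrightarrow> i \<le> i' \<Longrightarrow> i' < length R \<Longrightarrow> length (R ! i') \<le> length (R ! i)"
  unfolding is_partition_def
  by (cases "i = i'") (auto dest: sorted_wrt_nth_less[where i = i and j = i'])

lemma ss_rows_lengths:
  "ss_rows R \<Longrightarrow> i \<le> i' \<Longrightarrow> i' < length R \<Longrightarrow> length (R ! i') \<le> length (R ! i)"
  by (auto simp: ss_rows_def intro: partition_row_lengths)

lemma ss_rows_raise_cell: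
  assumes ss: "ss_rows R" and i: "i < length R" and j: "j < length (R ! i)" and v: "R ! i ! j = a"
    and right: "Suc j < length (R ! i) \<Longrightarrow> R ! i ! Suc j \<noteq> a"
    and above: "Suc i < length R \<Longrightarrow> j < length (R ! Suc i) \<Longrightarrow> R ! Suc i ! j \<noteq> Suc a"
  shows "ss_rows (R[i := (R ! i)[j := Suc a]])"
proof -
  let ?R = "R[i := (R ! i)[j := Suc a]]"
  have "map length ?R = map length R" by (rule nth_equalityI) (auto simp: nth_list_update i)
  moreover have "sorted ((R ! i)[j := Suc a])"
    unfolding sorted_iff_nth_Suc
  proof (intro allI impI)
    fix m assume m: "Suc m < length ((R ! i)[j := Suc a])"
    have "R ! i ! m \<le> R ! i ! Suc m" using ss i m by (auto simp: ss_rows_def sorted_iff_nth_Suc)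
    then show "(R ! i)[j := Suc a] ! m \<le> (R ! i)[j := Suc a] ! Suc m"
      using v m right by (cases "m = j"; cases "Suc m = j") (auto simp: nth_list_update)
  qed
  then have "\<forall>k<length ?R. sorted (?R ! k)" using ss i by (auto simp: nth_list_update ss_rows_def)
  moreover have "?R ! k ! jj < ?R ! Suc k ! jj" if k: "Suc k < length ?R" and jj: "jj < length (?R ! Suc k)" for k jj
  proof -
    have jj': "jj < length (R ! Suc k)" using jj k by (cases "Suc k = i") auto
    then show ?thesis using ss_rows_column[OF ss _ jj'] v i j k above
      by (cases "k = i"; cases "Suc k = i"; cases "jj = j") (auto simp: nth_list_update)
  qed
  ultimately show ?thesis using ss by (simp add: ss_rows_def)
qed

lemma ss_rows_lower_cell:
  assumes ss: "ss_rows R" and i: "i < length R" and j: "j < length (R ! i)" and v: "R ! i ! j = Suc a"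
    and left: "0 < j \<Longrightarrow> R ! i ! (j - 1) \<noteq> Suc a"
    and below: "0 < i \<Longrightarrow> R ! (i - 1) ! j \<noteq> a"
  shows "ss_rows (R[i := (R ! i)[j := a]])"
proof -
  let ?R = "R[i := (R ! i)[j := a]]"
  have "map length ?R = map length R" by (rule nth_equalityI) (auto simp: nth_list_update i)
  moreover have "sorted ((R ! i)[j := a])"
    unfolding sorted_iff_nth_Suc
  proof (intro allI impI)
    fix m assume m: "Suc m < length ((R ! i)[j := a])"
    have "R ! i ! m \<le> R ! i ! Suc m" using ss i m by (auto simp: ss_rows_def sorted_iff_nth_Suc)
    then show "(R ! i)[j := a] ! m \<le> (R ! i)[j := a] ! Suc m"
      using v m left by (cases "m = j"; cases "Suc m = j") (auto simp: nth_list_update)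
  qed
  then have "\<forall>k<length ?R. sorted (?R ! k)" using ss i by (auto simp: nth_list_update ss_rows_def)
  moreover have "?R ! k ! jj < ?R ! Suc k ! jj" if k: "Suc k < length ?R" and jj: "jj < length (?R ! Suc k)" for k jj
  proof -
    have jj': "jj < length (R ! Suc k)" using jj k by (cases "Suc k = i") auto
    then show ?thesis using ss_rows_column[OF ss _ jj'] v i j k below
      by (cases "k = i"; cases "Suc k = i"; cases "jj = j") (auto simp: nth_list_update)
  qed
  ultimately show ?thesis using ss by (simp add: ss_rows_def)
qed

text \<open>The cell \<open>(i, j)\<close> (row \<open>i\<close> from the bottom, column \<open>j\<close>) sits at position
  \<open>row_offset R i + j\<close> of the reading word \<open>concat (rev R)\<close>.\<close>

definition row_offset :: "'a list list \<Rightarrow> nat \<Rightarrow> nat" where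
  "row_offset R i = length (concat (drop (Suc i) R))"

lemma row_offset_Cons_Suc [simp]: "row_offset (r # R) (Suc i) = row_offset R i"
  by (simp add: row_offset_def)

lemma row_offset_Cons_0: "row_offset (r # R) 0 = length (concat (rev R))"
  by (simp add: row_offset_def length_concat rev_map[symmetric] sum_list_rev)

lemma nth_reading_word:
  "i < length R \<Longrightarrow> j < length (R ! i) \<Longrightarrow>
   row_offset R i + j < length (concat (rev R)) \<and> concat (rev R) ! (row_offset R i + j) = R ! i ! j"
proof (induction R arbitrary: i)
  case (Cons r R)
  show ?case
  proof (cases i)
    case 0
    then show ?thesis using Cons.prems by (simp add: row_offset_Cons_0 nth_append)
  next
    case (Suc k)
    then show ?thesis using Cons.IH[of k] Cons.prems by (simp add: nth_append)
  qed
qed simp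

lemma position_reading_word:
  "q < length (concat (rev R)) \<Longrightarrow> \<exists>i j. i < length R \<and> j < length (R ! i) \<and> q = row_offset R i + j"
proof (induction R)
  case (Cons r R)
  show ?case
  proof (cases "q < length (concat (rev R))")
    case True
    then obtain i j where "i < length R" "j < length (R ! i)" "q = row_offset R i + j"
      using Cons.IH by blast
    then show ?thesis by (intro exI[of _ "Suc i"] exI[of _ j]) simp
  next
    case False
    then show ?thesis using Cons.prems
      by (intro exI[of _ 0] exI[of _ "q - length (concat (rev R))"]) (auto simp: row_offset_Cons_0)
  qed
qed simp

lemma row_offset_mono:
  "i' < i \<Longrightarrow> i < length R \<Longrightarrow> row_offset R i + length (R ! i) \<le> row_offset R i'"
proof (induction R arbitrary: i i')
  case (Cons r R)
  then obtain k where k: "i = Suc k" by (cases i) auto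
  show ?case
  proof (cases i')
    case 0
    have "concat R = concat (take k R) @ R ! k @ concat (drop (Suc k) R)"
      using Cons.prems k by (metis Cons_nth_drop_Suc append_take_drop_id concat.simps(2) concat_append
          length_Cons not_less_eq)
    then have "row_offset R k + length (R ! k) \<le> length (concat R)" by (simp add: row_offset_def)
    then show ?thesis
      using 0 k by (simp add: row_offset_Cons_0 length_concat rev_map[symmetric] sum_list_rev)
  next
    case (Suc k')
    then show ?thesis using Cons k by simp
  qed
qed simp

lemma reading_order_iff:
  assumes "i < length R" "j < length (R ! i)" "i' < length R" "j' < length (R ! i')"
  shows "row_offset R i + j < row_offset R i' + j' \<longleftrightarrow> i' < i \<or> (i = i' \<and> j < j')"
  using row_offset_mono[of i' i R] row_offset_mono[of i i' R] assms
  by (cases "i < i'"; cases "i' < i") auto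

lemma concat_rev_update:
  "i < length R \<Longrightarrow> j < length (R ! i) \<Longrightarrow>
   concat (rev (R[i := (R ! i)[j := v]])) = (concat (rev R))[row_offset R i + j := v]"
proof (induction R arbitrary: i)
  case (Cons r R)
  show ?case
  proof (cases i)
    case 0 then show ?thesis using Cons.prems by (simp add: row_offset_Cons_0 list_update_append)
  next
    case (Suc k)
    then have "row_offset R k + j < length (concat (rev R))" using nth_reading_word[of k R j] Cons.prems by simp
    then show ?thesis using Cons Suc by (simp add: list_update_append)
  qed
qed simp

definition rank :: "('a \<Rightarrow> bool) \<Rightarrow> 'a list \<Rightarrow> nat \<Rightarrow> nat" where
  "rank P w p = length (filter P (take p w))"

lemma rank_Suc: "p < length w \<Longrightarrow> rank P w (Suc p) = rank P w p + (if P (w ! p) then 1 else 0)"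
  by (simp add: rank_def take_Suc_conv_app_nth)

lemma rank_mono: "p \<le> p' \<Longrightarrow> rank P w p \<le> rank P w p'"
  unfolding rank_def by (metis append_take_drop_id filter_append le_add1 length_append min.absorb1 take_take)

lemma rank_le_length: "rank P w p \<le> length (filter P w)"
  by (metis append_take_drop_id filter_append le_add1 length_append rank_def)

lemma rank_less: "p < p' \<Longrightarrow> p < length w \<Longrightarrow> P (w ! p) \<Longrightarrow> rank P w p < rank P w p'"
  using rank_Suc[of p w P] rank_mono[of "Suc p" p' P w] by simp

lemma rank_less_length: "p < length w \<Longrightarrow> P (w ! p) \<Longrightarrow> rank P w p < length (filter P w)"
  using rank_less[of p "length w" w P] rank_le_length[of P w "length w"] by (simp add: rank_def)

lemma nth_filter_rank: "p < length (w :: word) \<Longrightarrow> P (w ! p) \<Longrightarrow> filter P w ! rank P w p = w ! p"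
  using fill_sub_nth[of "filter P w" P w p] fill_sub_filter[of P w] by (simp add: rank_def)

lemma rank_surj: "k < length (filter P w) \<Longrightarrow> \<exists>p<length w. P (w ! p) \<and> rank P w p = k"
proof (induction w arbitrary: k)
  case (Cons x w)
  show ?case
  proof (cases "P x \<and> k = 0")
    case True
    then show ?thesis by (intro exI[of _ 0]) (simp add: rank_def)
  next
    case False
    then have "(if P x then k - 1 else k) < length (filter P w)" using Cons.prems by auto
    then obtain p where "p < length w" "P (w ! p)" "rank P w p = (if P x then k - 1 else k)"
      using Cons.IH by blast
    then show ?thesis using False by (intro exI[of _ "Suc p"]) (auto simp: rank_def)
  qed
qed simp

lemma rank_less_imp_less:
  "p < length w \<Longrightarrow> p' < length w \<Longrightarrow> P (w ! p') \<Longrightarrow> rank P w p < rank P w p' \<Longrightarrow> p < p'"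
  using rank_less[of p' p w P] by (cases "p < p'"; cases "p' < p") auto

lemma fill_sub_list_update:
  fixes w :: word
  assumes k: "k < length (filter P w)"
  obtains q where "q < length w" "P (w ! q)" "rank P w q = k"
    and "fill_sub P w ((filter P w)[k := v]) = w[q := v]"
proof -
  obtain q where q: "q < length w" "P (w ! q)" "rank P w q = k"
    using rank_surj[OF k] by blast
  have "fill_sub P w ((filter P w)[k := v]) ! p = w[q := v] ! p" if p: "p < length w" for p
  proof (cases "P (w ! p)")
    case True
    have "p = q \<longleftrightarrow> rank P w p = k"
      using rank_less[of p q w P] rank_less[of q p w P] p True q by (cases "p < q"; cases "q < p") auto
    then show ?thesis using fill_sub_nth[of "(filter P w)[k := v]" P w p] p True q
        nth_filter_rank[of p w P] rank_less_length[of p w P] by (auto simp: rank_def)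
  next
    case False
    then have "p \<noteq> q" using q(2) by auto
    then show ?thesis using fill_sub_nth[of "(filter P w)[k := v]" P w p] p False by simp
  qed
  then have "fill_sub P w ((filter P w)[k := v]) = w[q := v]" by (intro nth_equalityI) auto
  with q that show ?thesis by blast
qed

section \<open>\<open>\<sigma>\<^sub>a\<close> preserves semistandardness\<close>

text \<open>On the three-letter subword of letters \<open>a, a + 1\<close>, \<open>\<sigma>\<^sub>a\<close> changes exactly one letter, so
  on the tableau it changes the entry of one cell; the reading order of cells (top rows first)
  rules out every neighbour that could break semistandardness.\<close>

locale sigma_on_rows =
  fixes R :: "nat list list" and a :: nat
  assumes ss: "ss_rows R" and applies: "sigma_applies a (concat (rev R))"
begin

definition pair_subword :: word where
  "pair_subword = filter (pair_letter a) (concat (rev R))"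

definition pair_cell :: "nat \<Rightarrow> nat \<Rightarrow> bool" where
  "pair_cell i j \<longleftrightarrow> i < length R \<and> j < length (R ! i) \<and> pair_letter a (R ! i ! j)"

definition cell_rank :: "nat \<Rightarrow> nat \<Rightarrow> nat" where
  "cell_rank i j = rank (pair_letter a) (concat (rev R)) (row_offset R i + j)"

lemma length_pair_subword: "length pair_subword = 3"
  using pair_subword_cases[OF applies] by (auto simp: pair_subword_def)

lemma pair_subword_cell_rank:
  assumes "pair_cell i j"
  shows "cell_rank i j < length pair_subword" and "pair_subword ! cell_rank i j = R ! i ! j"
proof -
  have ij: "i < length R" "j < length (R ! i)" "pair_letter a (R ! i ! j)"
    using assms by (auto simp: pair_cell_def)
  have pos: "row_offset R i + j < length (concat (rev R))"
      "concat (rev R) ! (row_offset R i + j) = R ! i ! j"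
    using nth_reading_word[OF ij(1,2)] by auto
  show "cell_rank i j < length pair_subword" "pair_subword ! cell_rank i j = R ! i ! j"
    using rank_less_length[OF pos(1), of "pair_letter a"] nth_filter_rank[OF pos(1), of "pair_letter a"]
      pos(2) ij(3) unfolding cell_rank_def pair_subword_def by simp_all
qed

lemma cell_rank_less:
  assumes "pair_cell i j" "i' < length R" "j' < length (R ! i')" "i' < i \<or> (i = i' \<and> j < j')"
  shows "cell_rank i j < cell_rank i' j'"
  using assms nth_reading_word[of i R j] reading_order_iff[of i R j i' j']
  by (auto simp: pair_cell_def cell_rank_def intro: rank_less)

lemma cell_order_of_rank_less:
  assumes "pair_cell i j" "pair_cell i' j'" "cell_rank i j < cell_rank i' j'"
  shows "i' < i \<or> (i = i' \<and> j < j')"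
  using assms nth_reading_word[of i R j] nth_reading_word[of i' R j'] reading_order_iff[of i R j i' j']
    rank_less_imp_less[of "row_offset R i + j" "concat (rev R)" "row_offset R i' + j'" "pair_letter a"]
  by (auto simp: pair_cell_def cell_rank_def)

lemma cell_of_rank:
  assumes "k < length pair_subword"
  obtains i j where "pair_cell i j" "cell_rank i j = k"
proof -
  obtain p where p: "p < length (concat (rev R))" "pair_letter a (concat (rev R) ! p)"
      "rank (pair_letter a) (concat (rev R)) p = k"
    using rank_surj assms by (metis pair_subword_def)
  then obtain i j where "i < length R" "j < length (R ! i)" "p = row_offset R i + j"
    using position_reading_word by blast
  with p that show ?thesis using nth_reading_word[of i R j] by (auto simp: pair_cell_def cell_rank_def)
qed

lemma cell_rank_right:
  assumes "pair_cell i j" "Suc j < length (R ! i)"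
  shows "cell_rank i (Suc j) = Suc (cell_rank i j)"
  using assms nth_reading_word[of i R j] rank_Suc[of "row_offset R i + j" "concat (rev R)" "pair_letter a"]
  by (simp add: pair_cell_def cell_rank_def)

lemma vertical_domino_not_first_and_last:
  assumes top: "pair_cell (Suc i) j" "R ! Suc i ! j = Suc a" "cell_rank (Suc i) j = 0"
    and bottom: "pair_cell i j" "R ! i ! j = a" "cell_rank i j = 2"
  shows False
proof -
  obtain i2 j2 where mid: "pair_cell i2 j2" "cell_rank i2 j2 = 1"
    using cell_of_rank[of 1] length_pair_subword by auto
  have "Suc i > i2 \<or> (Suc i = i2 \<and> j < j2)" "i2 > i \<or> (i2 = i \<and> j2 < j)"
    using cell_order_of_rank_less[OF top(1) mid(1)] cell_order_of_rank_less[OF mid(1) bottom(1)]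
      top(3) bottom(3) mid(2) by auto
  then consider "i2 = Suc i" "j < j2" | "i2 = i" "j2 < j" by linarith
  then show False
  proof cases
    case 1
    have j2: "j2 < length (R ! i)"
      using mid(1) 1 ss_rows_lengths[OF ss, of i "Suc i"] by (auto simp: pair_cell_def)
    have "R ! Suc i ! j \<le> R ! Suc i ! j2" "R ! i ! j \<le> R ! i ! j2" "R ! i ! j2 < R ! Suc i ! j2"
      using mid(1) 1 j2 ss_rows_sorted[OF ss] ss_rows_column[OF ss] by (auto simp: pair_cell_def)
    then have "pair_cell i j2"
      using mid(1) 1 j2 top(2) bottom(1,2) by (auto simp: pair_cell_def pair_letter_def)
    moreover have "cell_rank i j < cell_rank i j2"
      by (rule cell_rank_less) (use bottom(1) j2 1 in \<open>auto simp: pair_cell_def\<close>)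
    ultimately show False
      using pair_subword_cell_rank(1)[of i j2] bottom(3) length_pair_subword by simp
  next
    case 2
    have "R ! i ! j2 \<le> R ! i ! j" "R ! Suc i ! j2 \<le> R ! Suc i ! j" "R ! i ! j2 < R ! Suc i ! j2"
      using mid(1) 2 top(1) bottom(1) ss_rows_sorted[OF ss] ss_rows_column[OF ss]
      by (auto simp: pair_cell_def)
    then have "pair_cell (Suc i) j2"
      using mid(1) 2 top(1,2) bottom(2) by (auto simp: pair_cell_def pair_letter_def)
    then show False
      using cell_rank_less[of "Suc i" j2 "Suc i" j] top 2 by (auto simp: pair_cell_def)
  qed
qed

lemma sigma_eq_update_cell:
  assumes k: "k < length pair_subword" and sig3: "sig3 a pair_subword = pair_subword[k := v]"
    and update: "\<And>i j. pair_cell i j \<Longrightarrow> cell_rank i j = k \<Longrightarrow> ss_rows (R[i := (R ! i)[j := v]])"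
  shows "\<exists>R'. sigma a (concat (rev R)) = concat (rev R') \<and> map length R' = map length R \<and> ss_rows R'"
proof -
  obtain q where q: "q < length (concat (rev R))" "pair_letter a (concat (rev R) ! q)"
      "rank (pair_letter a) (concat (rev R)) q = k"
    and "fill_sub (pair_letter a) (concat (rev R)) (pair_subword[k := v]) = (concat (rev R))[q := v]"
    using fill_sub_list_update k unfolding pair_subword_def by metis
  then have sigma: "sigma a (concat (rev R)) = (concat (rev R))[q := v]"
    using applies sig3 by (simp add: sigma_eq_fill_sub pair_subword_def)
  obtain i j where ij: "i < length R" "j < length (R ! i)" "q = row_offset R i + j"
    using position_reading_word q(1) by blast
  then have "pair_cell i j" "cell_rank i j = k"
    using q nth_reading_word[OF ij(1,2)] by (auto simp: pair_cell_def cell_rank_def)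
  moreover have "map length (R[i := (R ! i)[j := v]]) = map length R"
    by (rule nth_equalityI) (auto simp: nth_list_update ij)
  ultimately show ?thesis
    using update sigma concat_rev_update[OF ij(1,2)] ij(3) by (intro exI[of _ "R[i := (R ! i)[j := v]]"]) simp
qed

lemma sigma_raises_cell:
  assumes k: "k < length pair_subword" "pair_subword ! k = a" "sig3 a pair_subword = pair_subword[k := Suc a]"
    and right: "Suc k < length pair_subword \<Longrightarrow> pair_subword ! Suc k \<noteq> a"
    and above: "\<And>r. r < k \<Longrightarrow> pair_subword ! r = Suc a \<Longrightarrow> r = 0 \<and> k = 2"
  shows "\<exists>R'. sigma a (concat (rev R)) = concat (rev R') \<and> map length R' = map length R \<and> ss_rows R'"
proof (rule sigma_eq_update_cell[OF k(1,3)])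
  fix i j assume cell: "pair_cell i j" and rank_k: "cell_rank i j = k"
  then have a: "R ! i ! j = a" using pair_subword_cell_rank[OF cell] k by simp
  show "ss_rows (R[i := (R ! i)[j := Suc a]])"
  proof (rule ss_rows_raise_cell[OF ss _ _ a])
    show "R ! i ! Suc j \<noteq> a" if "Suc j < length (R ! i)"
    proof
      assume right_a: "R ! i ! Suc j = a"
      then have "pair_cell i (Suc j)" using cell that by (simp add: pair_cell_def pair_letter_def)
      then show False
        using pair_subword_cell_rank[of i "Suc j"] cell_rank_right cell rank_k right right_a that by auto
    qed
    show "R ! Suc i ! j \<noteq> Suc a" if "Suc i < length R" "j < length (R ! Suc i)"
    proof
      assume above_b: "R ! Suc i ! j = Suc a"
      then have above_cell: "pair_cell (Suc i) j" using that by (simp add: pair_cell_def pair_letter_def)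
      then have "cell_rank (Suc i) j < k" using cell_rank_less[OF above_cell] cell rank_k
        by (auto simp: pair_cell_def)
      then show False
        using above[of "cell_rank (Suc i) j"] pair_subword_cell_rank[OF above_cell] rank_k a above_b
          vertical_domino_not_first_and_last[OF above_cell _ _ cell] by auto
    qed
  qed (use cell in \<open>auto simp: pair_cell_def\<close>)
qed

lemma sigma_lowers_cell:
  assumes k: "k < length pair_subword" "pair_subword ! k = Suc a" "sig3 a pair_subword = pair_subword[k := a]"
    and left: "0 < k \<Longrightarrow> pair_subword ! (k - 1) \<noteq> Suc a"
    and below: "\<And>r. k < r \<Longrightarrow> r < length pair_subword \<Longrightarrow> pair_subword ! r = a \<Longrightarrow> k = 0 \<and> r = 2"
  shows "\<exists>R'. sigma a (concat (rev R)) = concat (rev R') \<and> map length R' = map length R \<and> ss_rows R'"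
proof (rule sigma_eq_update_cell[OF k(1,3)])
  fix i j assume cell: "pair_cell i j" and rank_k: "cell_rank i j = k"
  then have b: "R ! i ! j = Suc a" using pair_subword_cell_rank[OF cell] k by simp
  show "ss_rows (R[i := (R ! i)[j := a]])"
  proof (rule ss_rows_lower_cell[OF ss _ _ b])
    show "R ! i ! (j - 1) \<noteq> Suc a" if "0 < j"
    proof
      assume left_b: "R ! i ! (j - 1) = Suc a"
      then have left_cell: "pair_cell i (j - 1)" using cell by (auto simp: pair_cell_def pair_letter_def)
      then have "cell_rank i j = Suc (cell_rank i (j - 1))"
        using cell_rank_right[OF left_cell] cell that by (simp add: pair_cell_def)
      then show False using pair_subword_cell_rank[OF left_cell] rank_k left left_b by auto
    qed
    show "R ! (i - 1) ! j \<noteq> a" if i_pos: "0 < i"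
    proof
      assume below_a: "R ! (i - 1) ! j = a"
      obtain i' where i: "i = Suc i'" using i_pos by (cases i) auto
      then have below_cell: "pair_cell i' j"
        using cell ss_rows_lengths[OF ss, of i' i] below_a by (auto simp: pair_cell_def pair_letter_def)
      then have "k < cell_rank i' j" using cell_rank_less[OF cell] rank_k i by (auto simp: pair_cell_def)
      then show False
        using below[of "cell_rank i' j"] pair_subword_cell_rank[OF below_cell] rank_k b i below_a
          vertical_domino_not_first_and_last[of i' j] cell below_cell by auto
    qed
  qed (use cell in \<open>auto simp: pair_cell_def\<close>)
qed

lemma ss_rows_sigma:
  "\<exists>R'. sigma a (concat (rev R)) = concat (rev R') \<and> map length R' = map length R \<and> ss_rows R'"
  using sig3_cases[OF pair_subword_cases[OF applies, folded pair_subword_def]]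
proof (elim disjE conjE)
  assume "pair_subword = [a, a, Suc a]" "sig3 a pair_subword = [a, Suc a, Suc a]"
  then show ?thesis by (intro sigma_raises_cell[of 1]) (auto simp: less_Suc_eq)
next
  assume "pair_subword = [a, Suc a, Suc a]" "sig3 a pair_subword = [a, a, Suc a]"
  then show ?thesis by (intro sigma_lowers_cell[of 1]) (auto simp: less_Suc_eq)
next
  assume "pair_subword = [a, Suc a, a]" "sig3 a pair_subword = [Suc a, Suc a, a]"
  then show ?thesis by (intro sigma_raises_cell[of 0]) auto
next
  assume "pair_subword = [Suc a, Suc a, a]" "sig3 a pair_subword = [a, Suc a, a]"
  then show ?thesis by (intro sigma_lowers_cell[of 0]) (auto simp: less_Suc_eq)
next
  assume "pair_subword = [Suc a, a, a]" "sig3 a pair_subword = [Suc a, a, Suc a]"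
  then show ?thesis by (intro sigma_raises_cell[of 2]) (auto simp: less_Suc_eq numeral_2_eq_2)
next
  assume "pair_subword = [Suc a, a, Suc a]" "sig3 a pair_subword = [Suc a, a, a]"
  then show ?thesis by (intro sigma_lowers_cell[of 2]) (auto simp: less_Suc_eq)
qed

end

lemma semistandard_sigma:
  assumes ss: "semistandard T" and applies: "sigma_applies a (snd T)"
  shows "semistandard (on_tab (sigma a) T)"
proof -
  have T: "T = tab_of_rows (rows T)" "ss_rows (rows T)" using semistandard_rows[OF ss] by auto
  moreover have "snd T = concat (rev (rows T))" using T(1) by (metis snd_tab_of_rows)
  ultimately have "sigma_on_rows (rows T) a"
    using applies by unfold_locales simp_all
  then obtain R' where "sigma a (concat (rev (rows T))) = concat (rev R')"
      "map length R' = map length (rows T)" "ss_rows R'"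
    using sigma_on_rows.ss_rows_sigma by blast
  then have "on_tab (sigma a) T = tab_of_rows R'" "ss_rows R'"
    using T(1) by (metis on_tab_def fst_tab_of_rows snd_tab_of_rows tab_of_rows_def)+
  then show ?thesis by (simp add: semistandard_tab_of_rows)
qed

section \<open>Semistandard tableaux of a given content\<close>

definition SSYT :: "nat list \<Rightarrow> tableau set" where
  "SSYT cs = {T. semistandard T \<and> has_content (snd T) cs}"

lemma letter_bounds:
  assumes "has_content w cs" "x \<in> set w"
  shows "0 < x \<and> x \<le> length cs"
proof -
  have "content_mult cs x \<noteq> 0"
    using assms count_list_0_iff[of w x] by (simp add: has_content_def ev_def)
  then show ?thesis by (simp add: content_mult_def split: if_splits)
qed

lemma length_has_content:
  assumes "has_content w cs"
  shows "length w = sum_list cs"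
proof -
  have "(\<Sum>x\<le>length cs. content_mult cs x) = sum_list cs" for cs
  proof (induction cs rule: rev_induct)
    case (snoc c cs)
    have "(\<Sum>x\<le>length cs. content_mult (cs @ [c]) x) = (\<Sum>x\<le>length cs. content_mult cs x)"
      by (rule sum.cong) (auto simp: content_mult_snoc)
    then show ?case using snoc by (simp add: content_mult_snoc)
  qed (simp add: content_mult_def)
  moreover have "set w \<subseteq> {..length cs}" using letter_bounds[OF assms] by auto
  ultimately show ?thesis
    using sum_count_set[of w "{..length cs}"] assms by (simp add: has_content_def ev_def)
qed

lemma finite_partitions_sum_le: "finite {sh. is_partition sh \<and> sum_list sh \<le> N}"
proof (rule finite_subset)
  have "length sh \<le> sum_list sh" if "0 \<notin> set sh" for sh :: "nat list"
    using that by (induction sh) auto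
  then show "{sh. is_partition sh \<and> sum_list sh \<le> N} \<subseteq> {sh. set sh \<subseteq> {0..N} \<and> length sh \<le> N}"
    by (force simp: is_partition_def dest: member_le_sum_list)
qed (rule finite_lists_length_le, simp)

lemma finite_add2_shapes: "finite (add2_shapes sh)"
  by (rule finite_subset[OF _ finite_partitions_sum_le[of "sum_list sh + 2"]])
    (auto simp: add2_shapes_def)

lemma finite_SSYT: "finite (SSYT cs)"
proof (rule finite_subset)
  show "SSYT cs \<subseteq>
      {sh. is_partition sh \<and> sum_list sh \<le> sum_list cs} \<times> {w. set w \<subseteq> {..length cs} \<and> length w = sum_list cs}"
    using letter_bounds length_has_content by (fastforce simp: SSYT_def semistandard_def)
  show "finite ({sh. is_partition sh \<and> sum_list sh \<le> sum_list cs} \<times>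
      {w. set w \<subseteq> {..length cs} \<and> length w = sum_list cs})"
    by (intro finite_cartesian_product finite_partitions_sum_le finite_lists_length_eq) simp
qed

lemma sum_SSYT_VS_swap:
  assumes mults: "mults_12 (xs @ p # q # ys)" and pq: "(p, q) \<in> {(1,2),(2,1)}"
  shows "(\<Sum>T\<in>SSYT (xs @ p # q # ys). f (VS T)) = (\<Sum>T\<in>SSYT (xs @ q # p # ys). f (VS T))"
proof -
  let ?g = "on_tab (sigma (Suc (length xs)))"
  have swap: "?g T \<in> SSYT (xs @ q' # p' # ys) \<and> ?g (?g T) = T \<and> VS (?g T) = VS T"
    if T: "T \<in> SSYT (xs @ p' # q' # ys)" and mults': "mults_12 (xs @ p' # q' # ys)"
      and pq': "(p', q') \<in> {(1,2),(2,1)}" for T p' q'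
  proof -
    have ss: "semistandard T" and content: "has_content (snd T) (xs @ p' # q' # ys)"
      using T by (auto simp: SSYT_def)
    note applies = has_content_sigma(1)[OF content pq' refl]
    have "?g T \<in> SSYT (xs @ q' # p' # ys)"
      using semistandard_sigma[OF ss applies] has_content_sigma(2)[OF content pq' refl]
      by (simp add: SSYT_def on_tab_def)
    moreover have "?g (?g T) = T" using sigma_sigma[OF applies] by (simp add: on_tab_def)
    moreover have "VS (?g T) = VS T"
      using VS_sigma[OF mults' pq' content refl, of "fst T"] by (simp add: on_tab_def)
    ultimately show ?thesis by blast
  qed
  have "mults_12 (xs @ q # p # ys)" "(q, p) \<in> {(1,2),(2,1)}" using mults pq by (auto simp: mults_12_def)
  then show ?thesis
    using swap[OF _ mults pq] swap[of _ q p]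
    by (intro sum.reindex_bij_witness[where i = ?g and j = ?g]) auto
qed

lemma sum_SSYT_VS_move_double:
  "mults_12 xs \<Longrightarrow>
   (\<Sum>T\<in>SSYT (xs @ 2 # replicate m 1). f (VS T)) = (\<Sum>T\<in>SSYT (xs @ replicate m 1 @ [2]). f (VS T))"
proof (induction m arbitrary: xs)
  case (Suc m)
  have "mults_12 (xs @ 2 # 1 # replicate m 1)" using Suc.prems by (auto simp: mults_12_def)
  then have "(\<Sum>T\<in>SSYT (xs @ 2 # replicate (Suc m) 1). f (VS T)) =
      (\<Sum>T\<in>SSYT ((xs @ [1]) @ 2 # replicate m 1). f (VS T))"
    using sum_SSYT_VS_swap[of xs 2 1 "replicate m 1" f] by simp
  also have "\<dots> = (\<Sum>T\<in>SSYT ((xs @ [1]) @ replicate m 1 @ [2]). f (VS T))"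
    using Suc.IH[of "xs @ [1]"] Suc.prems by (simp add: mults_12_def)
  also have "(xs @ [1]) @ replicate m 1 @ [2] = xs @ replicate (Suc m) 1 @ [2]" by simp
  finally show ?case .
qed simp

section \<open>Adding two cells with a new largest letter\<close>

definition rows_add_cells :: "nat \<Rightarrow> nat list list \<Rightarrow> nat list \<Rightarrow> nat list list" where
  "rows_add_cells m R sh' = map (\<lambda>i. (if i < length R then R ! i else []) @
     replicate (sh' ! i - pget (map length R) i) m) [0..<length sh']"

lemma add_cells_tab_of_rows:
  "add_cells m (tab_of_rows R) sh' = (sh', concat (rev (rows_add_cells m R sh')))"
  unfolding add_cells_def rows_add_cells_def rows_tab_of_rows fst_tab_of_rows by simp

lemma count_list_concat_rev: "count_list (concat (rev R)) x = (\<Sum>i<length R. count_list (R ! i) x)"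
proof -
  have "count_list (concat (rev R)) x = sum_list (map (\<lambda>r. count_list r x) R)"
    by (induction R) auto
  then show ?thesis by (simp add: sum_list_sum_nth atLeast0LessThan)
qed

lemma count_list_replicate: "count_list (replicate k m) x = (if x = m then k else 0)"
  by (induction k) auto

lemma pget_map_length: "pget (map length R) i = (if i < length R then length (R ! i) else 0)"
  by (simp add: pget_def)

lemma sum_pget: "length sh \<le> n \<Longrightarrow> (\<Sum>i<n. pget sh i) = sum_list sh"
proof -
  assume "length sh \<le> n"
  then have "{..<n} \<inter> {i. i < length sh} = {..<length sh}" by auto
  then show ?thesis by (simp add: pget_def sum.If_cases sum_list_sum_nth atLeast0LessThan)
qed

lemma add2_shapes_props:
  assumes sh: "is_partition sh" and sh': "sh' \<in> add2_shapes sh"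
  shows "length sh \<le> length sh'" and "\<And>i. i < length sh' \<Longrightarrow> pget sh i \<le> sh' ! i"
    and "\<And>i. pget sh' (Suc i) \<le> pget sh i" and "is_partition sh'"
    and "sum_list sh' = sum_list sh + 2"
proof -
  have le: "\<And>i. pget sh i \<le> pget sh' i" using sh' by (auto simp: add2_shapes_def)
  show "\<And>i. pget sh' (Suc i) \<le> pget sh i" "is_partition sh'" "sum_list sh' = sum_list sh + 2"
    using sh' by (auto simp: add2_shapes_def)
  show "length sh \<le> length sh'"
  proof (rule ccontr)
    assume "\<not> length sh \<le> length sh'"
    moreover have "0 \<notin> set sh" using sh by (simp add: is_partition_def)
    ultimately show False using le[of "length sh'"] nth_mem[of "length sh'" sh] by (auto simp: pget_def)
  qed
  show "pget sh i \<le> sh' ! i" if "i < length sh'" for i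
    using le[of i] that by (auto simp: pget_def split: if_splits)
qed

text \<open>The two new cells lie in different columns, so each new cell of row \<open>i + 1\<close> sits on top of an
  old cell of row \<open>i\<close>; this is what keeps the columns strictly increasing.\<close>

lemma length_rows_add_cells [simp]: "length (rows_add_cells m R sh') = length sh'"
  by (simp add: rows_add_cells_def)

lemma nth_rows_add_cells:
  "i < length sh' \<Longrightarrow>
   rows_add_cells m R sh' ! i = (if i < length R then R ! i else []) @ replicate (sh' ! i - pget (map length R) i) m"
  by (simp add: rows_add_cells_def)

lemma map_length_rows_add_cells:
  assumes "is_partition (map length R)" "sh' \<in> add2_shapes (map length R)"
  shows "map length (rows_add_cells m R sh') = sh'"
  using add2_shapes_props[OF assms] nth_rows_add_cells
  by (intro nth_equalityI) (auto simp: pget_map_length)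

lemma ss_rows_add_cells:
  assumes ss: "ss_rows R" and less: "\<forall>r\<in>set R. \<forall>x\<in>set r. x < m"
    and sh': "sh' \<in> add2_shapes (map length R)"
  shows "ss_rows (rows_add_cells m R sh')"
proof -
  let ?A = "rows_add_cells m R sh'"
  have R: "is_partition (map length R)" using ss by (simp add: ss_rows_def)
  note props = add2_shapes_props[OF R sh'] and A = nth_rows_add_cells[of _ sh' m R]
  have "sorted (?A ! i)" if i: "i < length ?A" for i
  proof -
    have "x < m" if "i < length R" "x \<in> set (R ! i)" for x using less nth_mem that by blast
    then show ?thesis using i A[of i] ss by (auto simp: ss_rows_def sorted_append less_imp_le)
  qed
  moreover have "?A ! i ! j < ?A ! Suc i ! j" if i: "Suc i < length ?A" and j: "j < length (?A ! Suc i)" for i j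
  proof (cases "Suc i < length R \<and> j < length (R ! Suc i)")
    case True
    then have "?A ! i ! j = R ! i ! j" "?A ! Suc i ! j = R ! Suc i ! j"
      using i A[of "Suc i"] A[of i] ss_rows_lengths[OF ss, of i "Suc i"] by (auto simp: nth_append)
    then show ?thesis using ss_rows_column[OF ss] True by simp
  next
    case False
    have j_sh': "j < sh' ! Suc i"
      using j i map_length_rows_add_cells[OF R sh', of m] by (metis length_map nth_map)
    then have "?A ! Suc i ! j = m" using False i A[of "Suc i"] by (auto simp: nth_append pget_map_length)
    moreover have "j < pget (map length R) i"
      using props(3)[of i] j_sh' i by (simp add: pget_def)
    then have ij: "i < length R" "j < length (R ! i)" by (auto simp: pget_map_length split: if_splits)
    then have "?A ! i ! j = R ! i ! j" using i A[of i] by (simp add: nth_append)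
    moreover have "R ! i ! j < m" using less ij by (meson nth_mem)
    ultimately show ?thesis by simp
  qed
  ultimately show ?thesis using map_length_rows_add_cells[OF R sh'] props(4) by (simp add: ss_rows_def)
qed

lemma count_rows_add_cells:
  assumes R: "is_partition (map length R)" and sh': "sh' \<in> add2_shapes (map length R)"
  shows "count_list (concat (rev (rows_add_cells m R sh'))) x =
    count_list (concat (rev R)) x + (if x = m then 2 else 0)"
proof -
  note props = add2_shapes_props[OF R sh']
  have "count_list (concat (rev (rows_add_cells m R sh'))) x =
      (\<Sum>i<length sh'. if i < length R then count_list (R ! i) x else 0) +
      (\<Sum>i<length sh'. if x = m then sh' ! i - pget (map length R) i else 0)"
    by (simp add: count_list_concat_rev rows_add_cells_def count_list_replicate sum.distrib[symmetric])
      (rule sum.cong, auto)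
  also have "(\<Sum>i<length sh'. if i < length R then count_list (R ! i) x else 0) = count_list (concat (rev R)) x"
  proof -
    have "{..<length sh'} \<inter> {i. i < length R} = {..<length R}" using props(1) by auto
    then show ?thesis by (simp add: count_list_concat_rev sum.If_cases)
  qed
  also have "(\<Sum>i<length sh'. sh' ! i - pget (map length R) i) =
      (\<Sum>i<length sh'. sh' ! i) - (\<Sum>i<length sh'. pget (map length R) i)"
    using props(2) by (intro sum_subtractf_nat) auto
  then have "(\<Sum>i<length sh'. if x = m then sh' ! i - pget (map length R) i else 0) = (if x = m then 2 else 0)"
    using props(1,5) sum_pget[of "map length R" "length sh'"]
    by (simp add: sum_list_sum_nth atLeast0LessThan)
  finally show ?thesis .
qed

lemma add_cells_in_SSYT:
  assumes T: "T \<in> SSYT cs" and sh': "sh' \<in> add2_shapes (fst T)" and m: "m = Suc (length cs)"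
  shows "add_cells m T sh' \<in> SSYT (cs @ [2])"
proof -
  have ss: "ss_rows (rows T)" and T_eq: "T = tab_of_rows (rows T)"
    and content: "has_content (concat (rev (rows T))) cs"
    using T semistandard_rows[of T] by (auto simp: SSYT_def) (metis snd_tab_of_rows)
  have less: "\<forall>r\<in>set (rows T). \<forall>x\<in>set r. x < m"
    using letter_bounds[OF content] m by fastforce
  have sh'_R: "sh' \<in> add2_shapes (map length (rows T))" using sh' T_eq by (metis fst_tab_of_rows)
  have "add_cells m T sh' = tab_of_rows (rows_add_cells m (rows T) sh')"
    using add_cells_tab_of_rows[of m "rows T" sh'] T_eq map_length_rows_add_cells[OF _ sh'_R] ss
    by (simp add: tab_of_rows_def ss_rows_def)
  moreover have "has_content (concat (rev (rows_add_cells m (rows T) sh'))) (cs @ [2])"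
    using count_rows_add_cells[OF _ sh'_R] ss content m content_mult_def[of cs m]
    by (auto simp: has_content_def ev_def content_mult_snoc ss_rows_def)
  ultimately show ?thesis
    using ss_rows_add_cells[OF ss less sh'_R] by (simp add: SSYT_def semistandard_tab_of_rows)
qed

lemma sorted_eq_filter_less_append_replicate:
  "sorted r \<Longrightarrow> \<forall>x\<in>set r. x \<le> m \<Longrightarrow> r = filter (\<lambda>x. x < m) r @ replicate (count_list r m) m"
proof (induction r)
  case (Cons x r)
  show ?case
  proof (cases "x < m")
    case False
    then have "\<forall>y\<in>set (x # r). y = m" using Cons.prems by fastforce
    then show ?thesis by (metis count_list_replicate filter_False not_less_iff_gr_or_eq
          replicate_length_same self_append_conv2)
  qed (use Cons in auto)
qed simp

lemma takeWhile_nonempty_padding: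
  assumes mono: "\<And>i. Suc i < length L \<Longrightarrow> length (L ! Suc i) \<le> length (L ! i)"
  defines "R \<equiv> takeWhile (\<lambda>r. r \<noteq> []) L"
  shows "L = R @ replicate (length L - length R) []"
proof -
  have "L ! k = []" if "length R \<le> k" "k < length L" for k
    using that
  proof (induction k)
    case (Suc k)
    then show ?case using mono[of k] nth_length_takeWhile[of "\<lambda>r. r \<noteq> []" L]
      by (cases "length R = Suc k") (auto simp: R_def)
  qed (use nth_length_takeWhile[of "\<lambda>r. r \<noteq> []" L] in \<open>auto simp: R_def\<close>)
  moreover have "length R \<le> length L" by (simp add: R_def length_takeWhile_le)
  ultimately show ?thesis
    by (intro nth_equalityI) (auto simp: nth_append R_def takeWhile_nth)
qed

lemma partition_takeWhile_nonempty:
  assumes mono: "\<And>i. Suc i < length L \<Longrightarrow> length (L ! Suc i) \<le> length (L ! i)"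
  shows "is_partition (map length (takeWhile (\<lambda>r. r \<noteq> []) L))"
  unfolding is_partition_def
proof
  let ?R = "takeWhile (\<lambda>r. r \<noteq> []) L"
  have "transp ((\<ge>) :: nat \<Rightarrow> nat \<Rightarrow> bool)" by (auto simp: transp_def)
  moreover have "length (?R ! Suc i) \<le> length (?R ! i)" if "Suc i < length ?R" for i
    using mono[of i] that length_takeWhile_le[of "\<lambda>r. r \<noteq> []" L] by (simp add: takeWhile_nth)
  ultimately show "sorted_wrt (\<ge>) (map length ?R)" by (simp add: sorted_wrt_iff_nth_Suc_transp)
  show "0 \<notin> set (map length ?R)" by (auto dest: set_takeWhileD)
qed

lemma ss_rows_prefixes:
  assumes ss: "ss_rows R'" and R: "is_partition (map length R)" "length R \<le> length R'"
    and prefix: "\<And>i. i < length R \<Longrightarrow> \<exists>t. R' ! i = R ! i @ t"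
  shows "ss_rows R"
proof -
  have nth: "R ! i ! j = R' ! i ! j" "j < length (R' ! i)" if "i < length R" "j < length (R ! i)" for i j
    using prefix[OF that(1)] that(2) by (auto simp: nth_append)
  have "sorted (R ! i)" if i: "i < length R" for i
  proof -
    obtain t where "R' ! i = R ! i @ t" using prefix[OF i] by blast
    moreover have "sorted (R' ! i)" using ss R(2) i by (simp add: ss_rows_def)
    ultimately show ?thesis by (simp add: sorted_append)
  qed
  moreover have "R ! i ! j < R ! Suc i ! j" if "Suc i < length R" "j < length (R ! Suc i)" for i j
    using nth[OF that] nth[of i j] ss_rows_column[OF ss, of i j] partition_row_lengths[OF R(1), of i "Suc i"]
      that R(2) by simp
  ultimately show ?thesis using R(1) by (simp add: ss_rows_def)
qed

text \<open>The cells of the largest letter \<open>m\<close> of a semistandard tableau form a horizontal strip at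
  the ends of the rows.\<close>

lemma rows_split_largest:
  assumes ss: "ss_rows R'" and le: "\<forall>r\<in>set R'. \<forall>x\<in>set r. x \<le> m"
  shows "i < length R' \<Longrightarrow> R' ! i = filter (\<lambda>x. x < m) (R' ! i) @ replicate (count_list (R' ! i) m) m"
    and "Suc i < length R' \<Longrightarrow> length (R' ! Suc i) \<le> length (filter (\<lambda>x. x < m) (R' ! i))"
proof -
  let ?F = "\<lambda>i. filter (\<lambda>x. x < m) (R' ! i)"
  show split: "R' ! i = ?F i @ replicate (count_list (R' ! i) m) m" if "i < length R'" for i
    using sorted_eq_filter_less_append_replicate[of "R' ! i" m] ss le nth_mem[OF that] that
    by (simp add: ss_rows_def)
  show "length (R' ! Suc i) \<le> length (?F i)" if i: "Suc i < length R'"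
  proof (rule ccontr)
    assume long: "\<not> ?thesis"
    have row: "R' ! i = ?F i @ replicate (count_list (R' ! i) m) m" using split i by simp
    have "length (?F i) < length (R' ! i)" using long ss_rows_lengths[OF ss, of i "Suc i"] i by simp
    then have "R' ! i ! length (?F i) = m" by (subst row, subst (asm) row) (simp add: nth_append)
    moreover have "R' ! i ! length (?F i) < R' ! Suc i ! length (?F i)"
      using long i by (intro ss_rows_column[OF ss]) auto
    moreover have "R' ! Suc i ! length (?F i) \<le> m" using le long i by (meson not_le nth_mem)
    ultimately show False by simp
  qed
qed

lemma rows_remove_largest:
  assumes ss: "ss_rows R'" and le: "\<forall>r\<in>set R'. \<forall>x\<in>set r. x \<le> m"
  defines "L \<equiv> map (filter (\<lambda>x. x < m)) R'"
  defines "R \<equiv> takeWhile (\<lambda>r. r \<noteq> []) L"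
  shows "ss_rows R" and "concat (rev R) = filter (\<lambda>x. x < m) (concat (rev R'))"
    and "rows_add_cells m R (map length R') = R'"
    and "\<And>i. pget (map length R) i \<le> pget (map length R') i"
    and "\<And>i. pget (map length R') (Suc i) \<le> pget (map length R) i"
proof -
  have split: "R' ! i = L ! i @ replicate (count_list (R' ! i) m) m" if "i < length R'" for i
    using rows_split_largest(1)[OF ss le that] that by (simp add: L_def)
  have strip: "length (R' ! Suc i) \<le> length (L ! i)" if "Suc i < length R'" for i
    using rows_split_largest(2)[OF ss le that] that by (simp add: L_def)
  have mono_L: "length (L ! Suc i) \<le> length (L ! i)" if "Suc i < length L" for i
    using strip[of i] that by (simp add: L_def) (meson le_trans length_filter_le)
  have pad: "L = R @ replicate (length L - length R) []"
    unfolding R_def by (rule takeWhile_nonempty_padding[OF mono_L])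
  have "length R \<le> length L" by (simp add: R_def length_takeWhile_le)
  have L_nth: "L ! i = (if i < length R then R ! i else [])" if "i < length L" for i
    using that \<open>length R \<le> length L\<close> by (subst pad) (auto simp: nth_append)
  have "length R \<le> length R'" using \<open>length R \<le> length L\<close> by (simp add: L_def)
  moreover have "is_partition (map length R)"
    unfolding R_def by (rule partition_takeWhile_nonempty[OF mono_L])
  moreover have "R' ! i = R ! i @ replicate (count_list (R' ! i) m) m" if "i < length R" for i
    using split[of i] L_nth[of i] that \<open>length R \<le> length L\<close> by (simp add: L_def)
  ultimately show "ss_rows R" by (intro ss_rows_prefixes[OF ss]) auto
  have "concat (rev L) = concat (rev R)" by (subst pad) simp
  then show "concat (rev R) = filter (\<lambda>x. x < m) (concat (rev R'))"
    by (simp add: L_def filter_concat rev_map)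
  have pget_R: "pget (map length R) i = (if i < length R' then length (L ! i) else 0)" for i
    using L_nth \<open>length R \<le> length R'\<close> by (auto simp: pget_map_length L_def)
  show "rows_add_cells m R (map length R') = R'"
  proof (rule nth_equalityI)
    fix i assume "i < length (rows_add_cells m R (map length R'))"
    then have i: "i < length R'" by (simp add: rows_add_cells_def)
    have "rows_add_cells m R (map length R') ! i = L ! i @ replicate (length (R' ! i) - length (L ! i)) m"
      using i L_nth[of i] pget_R[of i] by (simp add: rows_add_cells_def L_def)
    also have "length (R' ! i) - length (L ! i) = count_list (R' ! i) m"
      using arg_cong[OF split[OF i], of length] by simp
    finally show "rows_add_cells m R (map length R') ! i = R' ! i" using split[OF i] by simp
  qed (simp add: rows_add_cells_def)
  show "pget (map length R) i \<le> pget (map length R') i" for i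
    using split pget_R by (auto simp: pget_map_length) (metis le_add1 length_append)
  show "pget (map length R') (Suc i) \<le> pget (map length R) i" for i
    using strip pget_R by (auto simp: pget_map_length)
qed

definition remove_letter :: "nat \<Rightarrow> tableau \<Rightarrow> tableau \<times> nat list" where
  "remove_letter m T' =
     (tab_of_rows (takeWhile (\<lambda>r. r \<noteq> []) (map (filter (\<lambda>x. x < m)) (rows T'))), fst T')"

lemma SSYT_rows:
  assumes "T \<in> SSYT cs"
  shows "T = tab_of_rows (rows T)" and "ss_rows (rows T)" and "has_content (concat (rev (rows T))) cs"
  using assms semistandard_rows[of T] by (auto simp: SSYT_def) (metis snd_tab_of_rows)

lemma remove_letter_add_cells:
  assumes T: "T \<in> SSYT cs" and sh': "sh' \<in> add2_shapes (fst T)" and m: "m = Suc (length cs)"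
  shows "remove_letter m (add_cells m T sh') = (T, sh')"
proof -
  let ?R = "rows T"
  note T_rows = SSYT_rows[OF T]
  have less: "\<forall>r\<in>set ?R. \<forall>x\<in>set r. x < m" using letter_bounds[OF T_rows(3)] m by fastforce
  have sh'_R: "sh' \<in> add2_shapes (map length ?R)" using sh' T_rows(1) by (metis fst_tab_of_rows)
  have R_part: "is_partition (map length ?R)" using T_rows(2) by (simp add: ss_rows_def)
  note lengths = map_length_rows_add_cells[OF R_part sh'_R, of m]
  have add: "add_cells m T sh' = tab_of_rows (rows_add_cells m ?R sh')"
    using add_cells_tab_of_rows[of m ?R sh'] T_rows(1) lengths by (simp add: tab_of_rows_def)
  have "map (filter (\<lambda>x. x < m)) (rows_add_cells m ?R sh') = ?R @ replicate (length sh' - length ?R) []"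
  proof (rule nth_equalityI)
    fix i assume "i < length (map (filter (\<lambda>x. x < m)) (rows_add_cells m ?R sh'))"
    then have i: "i < length sh'" by (simp add: rows_add_cells_def)
    have "i < length ?R \<Longrightarrow> filter (\<lambda>x. x < m) (?R ! i) = ?R ! i"
      using less nth_mem by (fastforce simp: filter_id_conv)
    then show "map (filter (\<lambda>x. x < m)) (rows_add_cells m ?R sh') ! i =
        (?R @ replicate (length sh' - length ?R) []) ! i"
      using i by (simp add: rows_add_cells_def nth_append filter_replicate)
  qed (use add2_shapes_props(1)[OF R_part sh'_R] in \<open>simp add: rows_add_cells_def\<close>)
  moreover have "r \<noteq> []" if "r \<in> set ?R" for r using R_part that by (auto simp: is_partition_def)
  then have "takeWhile (\<lambda>r. r \<noteq> []) (?R @ replicate (length sh' - length ?R) []) = ?R"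
    by (cases "length sh' - length ?R") (auto simp: takeWhile_append2)
  ultimately show ?thesis using add T_rows(1) lengths by (simp add: remove_letter_def)
qed

lemma remove_letter_props:
  assumes T': "T' \<in> SSYT (cs @ [2])" and m: "m = Suc (length cs)"
  shows "fst (remove_letter m T') \<in> SSYT cs"
    and "snd (remove_letter m T') \<in> add2_shapes (fst (fst (remove_letter m T')))"
    and "add_cells m (fst (remove_letter m T')) (snd (remove_letter m T')) = T'"
proof -
  let ?R' = "rows T'"
  define R where "R = takeWhile (\<lambda>r. r \<noteq> []) (map (filter (\<lambda>x. x < m)) ?R')"
  note T'_rows = SSYT_rows[OF T']
  have "\<forall>r\<in>set ?R'. \<forall>x\<in>set r. x \<le> m" using letter_bounds[OF T'_rows(3)] m by fastforce
  note removed = rows_remove_largest[OF T'_rows(2) this, folded R_def]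
  have remove: "remove_letter m T' = (tab_of_rows R, map length ?R')"
    using T'_rows(1) by (simp add: remove_letter_def R_def) (metis fst_tab_of_rows)
  have content: "has_content (concat (rev R)) cs"
    using T'_rows(3) m removed(2)
    by (auto simp: has_content_def ev_def count_list_filter content_mult_snoc content_mult_def nth_append)
  then show "fst (remove_letter m T') \<in> SSYT cs"
    using remove removed(1) by (simp add: SSYT_def semistandard_tab_of_rows)
  have "sum_list (map length ?R') = sum_list (map length R) + 2"
    using length_has_content[OF T'_rows(3)] length_has_content[OF content]
    by (simp add: length_concat rev_map[symmetric] sum_list_rev)
  then have "map length ?R' \<in> add2_shapes (map length R)"
    using removed(1,4,5) T'_rows(2) by (simp add: add2_shapes_def ss_rows_def)
  then show "snd (remove_letter m T') \<in> add2_shapes (fst (fst (remove_letter m T')))"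
    using remove by simp
  show "add_cells m (fst (remove_letter m T')) (snd (remove_letter m T')) = T'"
  proof -
    have "add_cells m (tab_of_rows R) (map length ?R') = tab_of_rows ?R'"
      using add_cells_tab_of_rows[of m R "map length ?R'"] removed(3) by (simp add: tab_of_rows_def)
    then show ?thesis using remove T'_rows(1) by simp
  qed
qed

text \<open>Every tableau with one more doubled letter \<open>m\<close> on top arises exactly once from a tableau
  of content \<open>cs\<close> by adding two cells of \<open>m\<close>.\<close>

lemma sum_SSYT_snoc_2:
  assumes m: "m = Suc (length cs)"
  shows "(\<Sum>T'\<in>SSYT (cs @ [2]). g T') = (\<Sum>T\<in>SSYT cs. \<Sum>sh'\<in>add2_shapes (fst T). g (add_cells m T sh'))"
proof -
  have "(\<Sum>T\<in>SSYT cs. \<Sum>sh'\<in>add2_shapes (fst T). g (add_cells m T sh')) =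
      (\<Sum>(T, sh')\<in>Sigma (SSYT cs) (\<lambda>T. add2_shapes (fst T)). g (add_cells m T sh'))"
    by (rule sum.Sigma) (auto simp: finite_SSYT finite_add2_shapes)
  also have "\<dots> = (\<Sum>T'\<in>SSYT (cs @ [2]). g T')"
  proof (rule sum.reindex_bij_witness[where i = "remove_letter m" and j = "\<lambda>(T, sh'). add_cells m T sh'"])
    fix p assume "p \<in> Sigma (SSYT cs) (\<lambda>T. add2_shapes (fst T))"
    then show "remove_letter m (case p of (T, sh') \<Rightarrow> add_cells m T sh') = p"
      "(case p of (T, sh') \<Rightarrow> add_cells m T sh') \<in> SSYT (cs @ [2])"
      using remove_letter_add_cells[OF _ _ m] add_cells_in_SSYT[OF _ _ m] by auto
  next
    fix T' assume "T' \<in> SSYT (cs @ [2])"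
    note props = remove_letter_props[OF this m]
    then show "(case remove_letter m T' of (T, sh') \<Rightarrow> add_cells m T sh') = T'"
      by (simp add: split_beta)
    show "remove_letter m T' \<in> Sigma (SSYT cs) (\<lambda>T. add2_shapes (fst T))"
      using props(1,2) by (metis SigmaI prod.collapse)
  qed auto
  finally show ?thesis by simp
qed

section \<open>Standardization commutes with adding the two largest cells\<close>

text \<open>\<open>interleave bs v m\<close> reads \<open>bs\<close> as a mask: \<open>True\<close> takes the next letter of \<open>v\<close>, \<open>False\<close>
  inserts the letter \<open>m\<close>. Adding cells filled with \<open>m\<close> to a tableau is such an interleaving of its
  reading word, and the operators of the standardization loop never see the letter \<open>m\<close>.\<close>

fun interleave :: "bool list \<Rightarrow> word \<Rightarrow> nat \<Rightarrow> word" where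
  "interleave [] v m = []"
| "interleave (True # bs) [] m = interleave bs [] m"
| "interleave (True # bs) (x # v) m = x # interleave bs v m"
| "interleave (False # bs) v m = m # interleave bs v m"

lemma interleave_replicate_True:
  "interleave (replicate (length r) True @ bs) (r @ v) m = r @ interleave bs v m"
  by (induction r) auto

lemma interleave_replicate_False: "interleave (replicate k False @ bs) v m = replicate k m @ interleave bs v m"
  by (induction k) auto

lemma concat_interleave:
  "concat (map (\<lambda>(r, k). r @ replicate k m) zs) =
   interleave (concat (map (\<lambda>(r, k). replicate (length r) True @ replicate k False) zs)) (concat (map fst zs)) m"
  by (induction zs) (auto simp: interleave_replicate_True interleave_replicate_False)

definition cell_mask :: "nat list \<Rightarrow> nat list \<Rightarrow> bool list" where
  "cell_mask sh sh' = concat (rev (map (\<lambda>i. replicate (pget sh i) True @ replicate (sh' ! i - pget sh i) False)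
     [0..<length sh']))"

lemma add_cells_interleave:
  assumes w: "length w = sum_list sh" and sh': "length sh \<le> length sh'"
  shows "add_cells m (sh, w) sh' = (sh', interleave (cell_mask sh sh') w m)"
proof -
  let ?R = "rows (sh, w)"
  have R: "map length ?R = sh" "concat (rev ?R) = w"
    using tab_of_rows_rows[of "(sh, w)"] w by (auto simp: tab_of_rows_def)
  have R_lengths: "length ?R = length sh" "\<And>i. i < length ?R \<Longrightarrow> length (?R ! i) = sh ! i"
    using R(1) by (metis length_map, metis nth_map)
  define zs where "zs = rev (map (\<lambda>i. (if i < length ?R then ?R ! i else [], sh' ! i - pget sh i)) [0..<length sh'])"
  have "add_cells m (sh, w) sh' = (sh', concat (rev (rows_add_cells m ?R sh')))"
    using add_cells_tab_of_rows[of m ?R sh'] R by (simp add: tab_of_rows_def)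
  also have "concat (rev (rows_add_cells m ?R sh')) = concat (map (\<lambda>(r, k). r @ replicate k m) zs)"
    by (simp add: rows_add_cells_def zs_def rev_map R(1) comp_def)
  also have "\<dots> = interleave (concat (map (\<lambda>(r, k). replicate (length r) True @ replicate k False) zs))
      (concat (map fst zs)) m"
    by (rule concat_interleave)
  also have "concat (map (\<lambda>(r, k). replicate (length r) True @ replicate k False) zs) = cell_mask sh sh'"
    unfolding zs_def cell_mask_def rev_map[symmetric] using R_lengths
    by (auto simp: pget_def intro!: arg_cong[where f = concat] arg_cong[where f = rev])
  also have "concat (map fst zs) = w"
  proof -
    have "length ?R \<le> length sh'" using sh' R(1) by (metis length_map)
    then have "map (\<lambda>i. if i < length ?R then ?R ! i else []) [0..<length sh'] =
        ?R @ replicate (length sh' - length ?R) []"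
      by (intro nth_equalityI) (auto simp: nth_append)
    then show ?thesis using R(2) by (simp add: zs_def rev_map[symmetric] comp_def)
  qed
  finally show ?thesis .
qed

lemma count_cell_mask:
  assumes sh: "is_partition sh" and sh': "sh' \<in> add2_shapes sh"
  shows "count_list (cell_mask sh sh') True = sum_list sh" and "count_list (cell_mask sh sh') False = 2"
proof -
  note props = add2_shapes_props[OF sh sh']
  have count: "count_list (cell_mask sh sh') b =
      (\<Sum>i<length sh'. count_list (replicate (pget sh i) True @ replicate (sh' ! i - pget sh i) False) b)" for b
    unfolding cell_mask_def by (simp add: count_list_concat_rev)
  show "count_list (cell_mask sh sh') True = sum_list sh"
    using count[of True] sum_pget[OF props(1)] by (simp add: count_list_replicate)
  have "count_list (cell_mask sh sh') False = (\<Sum>i<length sh'. sh' ! i - pget sh i)"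
    using count[of False] by (simp add: count_list_replicate)
  also have "\<dots> = (\<Sum>i<length sh'. sh' ! i) - (\<Sum>i<length sh'. pget sh i)"
    using props(2) by (intro sum_subtractf_nat) auto
  also have "\<dots> = 2" using sum_pget[OF props(1)] props(5) by (simp add: sum_list_sum_nth atLeast0LessThan)
  finally show "count_list (cell_mask sh sh') False = 2" .
qed

context
  fixes bs :: "bool list" and v :: word
  assumes length_v: "length v = count_list bs True"
begin

lemma count_interleave:
  "count_list (interleave bs v m) x = count_list v x + (if x = m then count_list bs False else 0)"
  using length_v by (induction bs v m rule: interleave.induct) auto

lemma filter_interleave: "\<not> P m \<Longrightarrow> filter P (interleave bs v m) = filter P v"
  using length_v by (induction bs v m rule: interleave.induct) auto

lemma fill_sub_interleave: "\<not> P m \<Longrightarrow> fill_sub P (interleave bs v m) s = interleave bs (fill_sub P v s) m"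
  using length_v by (induction bs v m arbitrary: s rule: interleave.induct) (auto split: list.splits)

lemma first_one_to_zero_interleave:
  "m \<noteq> 1 \<Longrightarrow> first_one_to_zero (interleave bs v m) = interleave bs (first_one_to_zero v) m"
  using length_v by (induction bs v m rule: interleave.induct) auto

lemma map_interleave: "map f (interleave bs v m) = interleave bs (map f v) (f m)"
  using length_v by (induction bs v m rule: interleave.induct) auto

lemma sigma_interleave:
  assumes "m \<noteq> a" "m \<noteq> Suc a"
  shows "sigma a (interleave bs v m) = interleave bs (sigma a v) m"
proof -
  have "sigma_applies a (interleave bs v m) = sigma_applies a v"
    using count_interleave assms by (simp add: sigma_applies_def ev_def)
  moreover have "filter (pair_letter a) (interleave bs v m) = filter (pair_letter a) v"
    using assms by (intro filter_interleave) (auto simp: pair_letter_def)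
  ultimately show ?thesis using assms by (simp add: sigma_eq_fill_sub fill_sub_interleave pair_letter_def)
qed

lemma r1101_interleave: "m \<noteq> 1 \<Longrightarrow> r1101 (interleave bs v m) = interleave bs (r1101 v) m"
  using count_interleave[of m 1] by (simp add: r1101_def ev_def first_one_to_zero_interleave)

lemma tau1_interleave: "tau1 (interleave bs v m) = interleave bs (tau1 v) (Suc m)"
  by (simp add: tau1_def map_interleave)

lemma has_content_interleave:
  assumes "has_content v cs" "count_list bs False = 2" "m = Suc (length cs)"
  shows "has_content (interleave bs v m) (cs @ [2])"
  using assms count_interleave content_mult_def[of cs m]
  by (auto simp: has_content_def ev_def content_mult_snoc)

end

lemma sigma_chain_interleave:
  "Suc k < m \<Longrightarrow> length v = count_list bs True \<Longrightarrow>
   sigma_chain k (interleave bs v m) = interleave bs (sigma_chain k v) m"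
  by (induction k arbitrary: v) (simp_all add: sigma_chain_Suc sigma_interleave)

lemma std_step_interleave:
  assumes mults: "mults_12 cs" "2 \<in> set cs" and content: "has_content v cs"
    and v: "length v = count_list bs True" and bs: "count_list bs False = 2" and m: "m = Suc (length cs)"
  shows "std_step (interleave bs v m) = interleave bs (std_step v) (Suc m)"
proof -
  obtain j rest where cs: "cs = replicate j 1 @ 2 # rest" using mults_12_first_double[OF mults] by blast
  have "has_content (interleave bs v m) (replicate j 1 @ 2 # rest @ [2])"
    using has_content_interleave[OF v content bs m] cs by simp
  then have "std_step (interleave bs v m) = tau1 (r1101 (sigma_chain j (interleave bs v m)))"
    by (rule std_step_eq_sigma_chain)
  moreover have "std_step v = tau1 (r1101 (sigma_chain j v))" using content cs by (simp add: std_step_eq_sigma_chain)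
  moreover have "Suc j < m" "m \<noteq> 1" using m cs by auto
  ultimately show ?thesis
    using v by (simp add: sigma_chain_interleave r1101_interleave tau1_interleave)
qed

lemma std_step_iter_interleave:
  assumes "mults_12 cs" "has_content v cs" "length v = count_list bs True" "count_list bs False = 2"
    and "m = Suc (length cs)"
  shows "(std_step ^^ doubles cs) (interleave bs v m) = interleave bs ((std_step ^^ doubles cs) v) (m + doubles cs)"
  using assms
proof (induction "doubles cs" arbitrary: cs v m)
  case (Suc k)
  then have two: "2 \<in> set cs" using doubles_eq_0_iff by force
  have k: "k = doubles (std_step_content cs)"
    using Suc.hyps(2) doubles_std_step_content[OF two Suc.prems(1)] by simp
  have "(std_step ^^ k) (interleave bs (std_step v) (Suc m)) =
      interleave bs ((std_step ^^ k) (std_step v)) (Suc m + k)"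
    using Suc.hyps(1)[OF k mults_12_std_step_content[OF Suc.prems(1)]
        has_content_std_step[OF Suc.prems(1) two Suc.prems(2)]]
      Suc.prems(3-5) length_std_step_content[OF two] k by simp
  then show ?case
    using std_step_interleave[OF Suc.prems(1) two Suc.prems(2-5)] Suc.hyps(2)[symmetric]
    by (simp add: funpow_Suc_right del: funpow.simps)
qed simp

lemma has_content_std_step_iter:
  "mults_12 cs \<Longrightarrow> has_content v cs \<Longrightarrow>
   has_content ((std_step ^^ doubles cs) v) (replicate (length cs + doubles cs) 1)"
proof (induction "doubles cs" arbitrary: cs v)
  case 0
  then have "replicate (length cs + doubles cs) 1 = cs"
    using mults_12_no_double[of cs, symmetric] doubles_eq_0_iff[of cs] by simp
  then show ?case using 0 by simp
next
  case (Suc k)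
  then have two: "2 \<in> set cs" using doubles_eq_0_iff by force
  have k: "k = doubles (std_step_content cs)"
    using Suc.hyps(2) doubles_std_step_content[OF two Suc.prems(1)] by simp
  show ?case
    using Suc.hyps(1)[OF k mults_12_std_step_content[OF Suc.prems(1)]
        has_content_std_step[OF Suc.prems(1) two Suc.prems(2)]]
      length_std_step_content[OF two] k Suc.hyps(2)[symmetric]
    by (simp add: funpow_Suc_right del: funpow.simps)
qed

lemma VS_add_cells:
  assumes T: "T \<in> SSYT cs" and mults: "mults_12 cs" and sh': "sh' \<in> add2_shapes (fst T)"
  shows "VS (add_cells (Suc (length cs)) T sh') =
    on_tab (tau1 \<circ> r1101 \<circ> sigma_chain (length (snd T))) (add_cells (Suc (length (snd T))) (VS T) sh')"
proof -
  obtain sh w where T_eq: "T = (sh, w)" by (cases T)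
  have content: "has_content w cs" and sh: "is_partition sh" "length w = sum_list sh"
    using T T_eq by (auto simp: SSYT_def semistandard_def)
  let ?bs = "cell_mask sh sh'" and ?m = "Suc (length cs)" and ?d = "doubles cs" and ?n = "length w"
  have sh'_sh: "sh' \<in> add2_shapes sh" and length_sh: "length sh \<le> length sh'"
    using sh' T_eq add2_shapes_props(1)[OF sh(1)] by auto
  have bs: "count_list ?bs True = ?n" "count_list ?bs False = 2"
    using count_cell_mask[OF sh(1) sh'_sh] sh(2) by auto
  have n: "?n = length cs + ?d" using length_has_content[OF content] mults_12_sum_list[OF mults] by simp
  define v where "v = (std_step ^^ ?d) w"
  have VS_T: "VS T = (sh, v)" using VS_eq_std_step_iter[OF mults content] T_eq by (simp add: v_def)
  have "VS (add_cells ?m T sh') = (sh', (std_step ^^ Suc ?d) (interleave ?bs w ?m))"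
    using add_cells_interleave[OF sh(2) length_sh] T_eq
      VS_eq_std_step_iter[of "cs @ [2]"] has_content_interleave[OF bs(1)[symmetric] content bs(2)] mults
    by (simp add: mults_12_def doubles_def)
  also have "(std_step ^^ Suc ?d) (interleave ?bs w ?m) = std_step (interleave ?bs v (Suc ?n))"
    using std_step_iter_interleave[OF mults content bs(1)[symmetric] bs(2) refl] n by (simp add: v_def)
  also have "\<dots> = tau1 (r1101 (sigma_chain ?n (interleave ?bs v (Suc ?n))))"
  proof -
    have "has_content v (replicate ?n 1)" using has_content_std_step_iter[OF mults content] n by (simp add: v_def)
    then have "has_content (interleave ?bs v (Suc ?n)) (replicate ?n 1 @ [2])"
      using has_content_interleave[where v = v and bs = ?bs and cs = "replicate ?n 1" and m = "Suc ?n"] bs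
      by (simp add: v_def)
    then show ?thesis using std_step_eq_sigma_chain[of _ ?n "[]"] by simp
  qed
  also have "(sh', \<dots>) = on_tab (tau1 \<circ> r1101 \<circ> sigma_chain ?n) (add_cells (Suc ?n) (sh, v) sh')"
    using add_cells_interleave[of v sh sh' "Suc ?n"] sh(2) length_sh by (simp add: on_tab_def v_def)
  finally show ?thesis using VS_T T_eq by simp
qed

section \<open>Linear combinations\<close>

lemma lin_sum_delta:
  assumes "finite A"
  shows "lin F (\<lambda>S. \<Sum>x\<in>A. delta (f x) S) S' = (\<Sum>x\<in>A. F (f x) S')"
proof -
  let ?c = "\<lambda>S. \<Sum>x\<in>A. delta (f x) S"
  have support: "{T. ?c T \<noteq> 0} \<subseteq> f ` A"
  proof
    fix T assume "T \<in> {T. ?c T \<noteq> 0}"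
    then have "\<exists>x\<in>A. delta (f x) T \<noteq> 0" by (auto intro: ccontr simp: sum.neutral)
    then show "T \<in> f ` A" by (auto simp: delta_def split: if_splits)
  qed
  have "lin F ?c S' = (\<Sum>T\<in>f ` A. ?c T * F T S')"
    unfolding lin_def using support assms by (intro sum.mono_neutral_left) auto
  also have "\<dots> = (\<Sum>x\<in>A. \<Sum>T\<in>f ` A. delta (f x) T * F T S')"
    by (simp add: sum_distrib_right sum.swap[of _ "f ` A"])
  also have "\<dots> = (\<Sum>x\<in>A. F (f x) S')"
  proof (rule sum.cong)
    fix x assume "x \<in> A"
    have "(\<Sum>T\<in>f ` A. delta (f x) T * F T S') = (\<Sum>T\<in>f ` A. if f x = T then F T S' else 0)"
      by (rule sum.cong) (auto simp: delta_def)
    then show "(\<Sum>T\<in>f ` A. delta (f x) T * F T S') = F (f x) S'" using \<open>x \<in> A\<close> assms by simp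
  qed simp
  finally show ?thesis .
qed

lemma H_eq_sum_SSYT:
  assumes "\<And>i. conj_part lam i = content_mult cs i"
  shows "H lam = (\<lambda>S. \<Sum>T\<in>SSYT cs. delta (VS T) S)"
proof -
  have "(\<lambda>T. if semistandard T \<and> (\<forall>i. ev (snd T) i = conj_part lam i) then 1 else 0) =
      (\<lambda>S. \<Sum>T\<in>SSYT cs. delta T S)"
    using assms finite_SSYT by (auto simp: SSYT_def has_content_def delta_def fun_eq_iff)
  then show ?thesis unfolding H_def using lin_sum_delta[OF finite_SSYT, of _ id] by (intro ext) simp
qed

lemma B20_tab_VS:
  assumes T: "T \<in> SSYT cs" and mults: "mults_12 cs"
  shows "B20_tab (VS T) S = (\<Sum>sh'\<in>add2_shapes (fst T). delta (VS (add_cells (Suc (length cs)) T sh')) S)"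
proof -
  obtain sh w where T_eq: "T = (sh, w)" by (cases T)
  have VS_T: "VS T = (sh, (std_step ^^ doubles cs) w)"
    using VS_eq_std_step_iter[OF mults] T T_eq by (simp add: SSYT_def)
  then show ?thesis
    using VS_add_cells[OF T mults] T_eq
    by (simp add: B20_tab_def A_op_def Let_def lin_sum_delta[OF finite_add2_shapes] comp_def)
qed

lemma conj_part_two_rows:
  assumes "is_partition lam" "length lam \<le> 2"
  defines "cs \<equiv> replicate (pget lam 1) 2 @ replicate (pget lam 0 - pget lam 1) (1 :: nat)"
  shows "conj_part lam i = content_mult cs i" and "conj_part (plus11 lam) i = content_mult (2 # cs) i"
proof -
  have "lam = [] \<or> (\<exists>x. lam = [x] \<and> x \<noteq> 0) \<or> (\<exists>x y. lam = [x, y] \<and> y \<le> x \<and> y \<noteq> 0)"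
    using assms by (cases lam rule: remdups_adj.cases) (auto simp: is_partition_def)
  then show "conj_part lam i = content_mult cs i" "conj_part (plus11 lam) i = content_mult (2 # cs) i"
    by (auto simp: cs_def conj_part_def content_mult_def pget_def plus11_def nth_append nth_Cons'
        split: nat.splits)
qed

theorem mainTheorem11:
  fixes lam :: "nat list"
  assumes "is_partition lam" and "length lam \<le> 2"
  shows "B20 (H lam) = H (plus11 lam)"
proof
  fix S
  define cs where "cs = replicate (pget lam 1) 2 @ replicate (pget lam 0 - pget lam 1) (1 :: nat)"
  note conj = conj_part_two_rows[OF assms, folded cs_def]
  have mults: "mults_12 cs" by (auto simp: cs_def mults_12_def)
  have "B20 (H lam) S = (\<Sum>T\<in>SSYT cs. B20_tab (VS T) S)"
    using lin_sum_delta[OF finite_SSYT] by (simp add: B20_def H_eq_sum_SSYT[OF conj(1)])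
  also have "\<dots> = (\<Sum>T\<in>SSYT cs. \<Sum>sh'\<in>add2_shapes (fst T). delta (VS (add_cells (Suc (length cs)) T sh')) S)"
    using B20_tab_VS[OF _ mults] by simp
  also have "\<dots> = (\<Sum>T'\<in>SSYT (cs @ [2]). delta (VS T') S)"
    by (rule sum_SSYT_snoc_2[symmetric]) simp
  also have "\<dots> = (\<Sum>T'\<in>SSYT (2 # cs). delta (VS T') S)"
  proof -
    have eqs: "cs @ [2] = replicate (pget lam 1) 2 @ replicate (pget lam 0 - pget lam 1) 1 @ [2]"
      "2 # cs = replicate (pget lam 1) 2 @ 2 # replicate (pget lam 0 - pget lam 1) 1"
      by (simp_all add: cs_def replicate_append_same[symmetric])
    show ?thesis
      unfolding eqs by (rule sum_SSYT_VS_move_double[symmetric]) (auto simp: mults_12_def)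
  qed
  also have "\<dots> = H (plus11 lam) S" using H_eq_sum_SSYT[OF conj(2)] by simp
  finally show "B20 (H lam) S = H (plus11 lam) S" .
qed

end
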